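(* Run the distributed regularized primal-dual algorithm described in the context for $T$ iterations with stepsize $\alpha(t)=\frac{R}{\sqrt{t+1}}$ and regularization parameter $\eta>0$ satisfying $\eta\alpha(t)\le\frac12$ for all $t\in[T]$. Then, as $T\to\infty$, \[ \left\|\left[\frac1n\sum_{i=1}^n g(\widehat{x}_i(T))\right]_+\right\|_2^2=\mathcal{O}(\eta). \] Furthermore, if the optimal solution $x_\ast$ is strictly feasible, i.e. $g_k(x_\ast)<0$ for all $k$, then \[ \left\|\left[\frac1n\sum_{i=1}^n g(\widehat{x}_i(T))\right]_+\right\|_2^2=\mathcal{O}\!\left(\frac{\eta\log(T)}{\sqrt{T}}\right). \]
   Context: $[v]_+$ denotes the componentwise positive part $\max\{0,v\}$. Norms are Euclidean. Problem: minimize $f(x)=\frac1n\sum_{i=1}^n f_i(x)$ over $\mathcal{X}=\{x\in\mathbb{R}^d: g_k(x)\le 0,\ k=1,\dots,m\}$; write $g=(g_1,\dots,g_m)^T$. Assumptions: $\mathcal{X}$ is non-empty, convex and compact; $R$ is the smallest radius with $\mathcal{X}\subseteq \mathbb{B}_d(R)=\{x:\|x\|\le R\}$; there is a Slater vector $\tilde x$ with $g_k(\tilde x)<0$ for all $k$; all $f_i$ and $g_k$ are convex on $\mathbb{B}_d(R)$ and all their subgradients there satisfy $\|\nabla f_i(x)\|\le L$, $\|\nabla g_k(x)\|\le L$. $x_\ast$ denotes an optimal solution. Agents $1,\dots,n$ are nodes of a connected graph $G=(V,E)$; $W\in\mathbb{R}^{n\times n}$ is doubly stochastic with $W_{ij}>0$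 if $(i,j)\in E$ and $W_{ij}=0$ if $(i,j)\notin E$. Regularized Lagrangian of agent $i$: $L_i(x,\lambda)=f_i(x)+\langle\lambda,g(x)\rangle-\frac{\eta}{2}\|\lambda\|^2$, with subgradients $\nabla_xL_i(x,\lambda)=\nabla f_i(x)+\sum_{k=1}^m\lambda_k\nabla g_k(x)$ and $\nabla_\lambda L_i(x,\lambda)=g(x)-\eta\lambda$. Algorithm: $x_i(0)=0$, $\lambda_i(0)=0$; for $t=0,1,2,\dots$: $y_i(t)=x_i(t)-\alpha(t)\nabla_xL_i(x_i(t),\lambda_i(t))$, $\gamma_i(t)=\lambda_i(t)+\alpha(t)\nabla_\lambda L_i(x_i(t),\lambda_i(t))$, $x_i(t+1)=\Pi_{\mathbb{B}_d(R)}(\sum_j W_{ij}y_j(t))$, $\lambda_i(t+1)=\Pi_{\mathbb{R}^m_+}(\sum_jW_{ij}\gamma_j(t))$, where $\Pi$ denotes Euclidean projection. The estimate is $\widehat{x}_i(T)=\sum_{t=0}^{T-1}\alpha(t)x_i(t)/\sum_{t=0}^{T-1}\alpha(t)$. *)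

theory Defs
  imports "HOL-Analysis.Analysis"
begin

definition gvec :: "('m::finite \<Rightarrow> real^'d::finite \<Rightarrow> real) \<Rightarrow> real^'d \<Rightarrow> real^'m" where
  "gvec g x = (\<chi> k. g k x)"

definition pos_part :: "real^'m::finite \<Rightarrow> real^'m" where
  "pos_part v = (\<chi> k. max 0 (v $ k))"

definition nonneg_orthant :: "(real^'m::finite) set" where
  "nonneg_orthant = {v. \<forall>k. 0 \<le> v $ k}"

definition feas_set :: "('m::finite \<Rightarrow> real^'d::finite \<Rightarrow> real) \<Rightarrow> (real^'d) set" where
  "feas_set g = {x. \<forall>k. g k x \<le> 0}"

definition avg_obj :: "('n::finite \<Rightarrow> real^'d::finite \<Rightarrow> real) \<Rightarrow> real^'d \<Rightarrow> real" where
  "avg_obj f x = (\<Sum>i\<in>UNIV. f i x) / real CARD('n)"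

definition stepsize :: "real \<Rightarrow> nat \<Rightarrow> real" where
  "stepsize R t = R / sqrt (real t + 1)"

text \<open>Parameters: subgradient selections
  df (of f_i) and dg (of g_k), constraint functions g, mixing matrix W, radius R,
  regularization eta, stepsizes alpha.\<close>
primrec alg_state ::
  "('n::finite \<Rightarrow> real^'d::finite \<Rightarrow> real^'d) \<Rightarrow> ('m::finite \<Rightarrow> real^'d \<Rightarrow> real^'d)
   \<Rightarrow> ('m \<Rightarrow> real^'d \<Rightarrow> real) \<Rightarrow> ('n \<Rightarrow> 'n \<Rightarrow> real) \<Rightarrow> real \<Rightarrow> real \<Rightarrow> (nat \<Rightarrow> real)
   \<Rightarrow> nat \<Rightarrow> ('n \<Rightarrow> real^'d) \<times> ('n \<Rightarrow> real^'m)" where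
  "alg_state df dg g W R \<eta> \<alpha> 0 = ((\<lambda>i. 0), (\<lambda>i. 0))"
| "alg_state df dg g W R \<eta> \<alpha> (Suc t) =
     (let X = fst (alg_state df dg g W R \<eta> \<alpha> t);
          \<Lambda> = snd (alg_state df dg g W R \<eta> \<alpha> t);
          y = (\<lambda>i. X i - \<alpha> t *\<^sub>R (df i (X i) + (\<Sum>k\<in>UNIV. (\<Lambda> i $ k) *\<^sub>R dg k (X i))));
          \<gamma> = (\<lambda>i. \<Lambda> i + \<alpha> t *\<^sub>R (gvec g (X i) - \<eta> *\<^sub>R \<Lambda> i))
      in ((\<lambda>i. closest_point (cball 0 R) (\<Sum>j\<in>UNIV. W i j *\<^sub>R y j)),
          (\<lambda>i. closest_point nonneg_orthant (\<Sum>j\<in>UNIV. W i j *\<^sub>R \<gamma> j))))"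

definition xhat ::
  "('n::finite \<Rightarrow> real^'d::finite \<Rightarrow> real^'d) \<Rightarrow> ('m::finite \<Rightarrow> real^'d \<Rightarrow> real^'d)
   \<Rightarrow> ('m \<Rightarrow> real^'d \<Rightarrow> real) \<Rightarrow> ('n \<Rightarrow> 'n \<Rightarrow> real) \<Rightarrow> real \<Rightarrow> real \<Rightarrow> (nat \<Rightarrow> real)
   \<Rightarrow> 'n \<Rightarrow> nat \<Rightarrow> real^'d" where
  "xhat df dg g W R \<eta> \<alpha> i T =
     (1 / (\<Sum>t<T. \<alpha> t)) *\<^sub>R (\<Sum>t<T. \<alpha> t *\<^sub>R fst (alg_state df dg g W R \<eta> \<alpha> t) i)"

definition viol ::
  "('n::finite \<Rightarrow> real^'d::finite \<Rightarrow> real^'d) \<Rightarrow> ('m::finite \<Rightarrow> real^'d \<Rightarrow> real^'d)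
   \<Rightarrow> ('m \<Rightarrow> real^'d \<Rightarrow> real) \<Rightarrow> ('n \<Rightarrow> 'n \<Rightarrow> real) \<Rightarrow> real \<Rightarrow> real \<Rightarrow> nat \<Rightarrow> real" where
  "viol df dg g W R \<eta> T =
     (norm (pos_part ((1 / real CARD('n)) *\<^sub>R
        (\<Sum>i\<in>UNIV. gvec g (xhat df dg g W R \<eta> (stepsize R) i T))))) ^ 2"

end

theory Submission
  imports Defs
begin

(*
  Each agent performs a projected primal-dual subgradient step on its regularized Lagrangian, so
  the summed squared distance of all iterates to any pair (x, mu) decreases by 2 alpha(t) times the
  Lagrangian gap, up to O(alpha(t)^2) terms; since eta alpha(t) <= 1/2 the duals stay below
  g_max / eta. Testing against a feasible x and mu = [mean of g(xhat_i(T))]_+ / eta, convexity of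
  the g_k turns the dual part of the gap into the violation divided by eta, and with
  sum alpha(t) ~ sqrt T and sum alpha(t)^2 ~ log T the violation is O(eta).

  If the optimum x_opt is strictly feasible, it minimizes sum_i f_i on the whole ball. The objective
  part of the gap is then bounded below by consensus errors: the average of two consecutive local
  iterates is close to the network mean (W contracts disagreement between nodes joined by even
  walks), and the mean cannot beat x_opt. The constraint part grows like slack(x_opt) times the duals
  and absorbs the dual-dependent gradient terms, which improves the rate to O(eta log T / sqrt T).
*)

definition mat_apply :: "('n::finite \<Rightarrow> 'n \<Rightarrow> real) \<Rightarrow> ('n \<Rightarrow> 'a::real_vector) \<Rightarrow> 'n \<Rightarrow> 'a" where
  "mat_apply A v = (\<lambda>i. \<Sum>j\<in>UNIV. A i j *\<^sub>R v j)"

definition mat_mult :: "('n::finite \<Rightarrow> 'n \<Rightarrow> real) \<Rightarrow> ('n \<Rightarrow> 'n \<Rightarrow> real) \<Rightarrow> 'n \<Rightarrow> 'n \<Rightarrow> real" where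
  "mat_mult A B = (\<lambda>i k. \<Sum>j\<in>UNIV. A i j * B j k)"

primrec mat_pow :: "('n::finite \<Rightarrow> 'n \<Rightarrow> real) \<Rightarrow> nat \<Rightarrow> 'n \<Rightarrow> 'n \<Rightarrow> real" where
  "mat_pow A 0 = (\<lambda>i j. if i = j then 1 else 0)"
| "mat_pow A (Suc k) = mat_mult A (mat_pow A k)"

lemma mat_apply_mat_mult: "mat_apply (mat_mult A B) v = mat_apply A (mat_apply B v)"
proof (rule ext)
  fix i
  have "mat_apply (mat_mult A B) v i = (\<Sum>k\<in>UNIV. \<Sum>j\<in>UNIV. (A i j * B j k) *\<^sub>R v k)"
    unfolding mat_apply_def mat_mult_def by (simp add: scaleR_sum_left)
  also have "\<dots> = (\<Sum>j\<in>UNIV. \<Sum>k\<in>UNIV. (A i j * B j k) *\<^sub>R v k)"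
    by (rule sum.swap)
  also have "\<dots> = mat_apply A (mat_apply B v) i"
    unfolding mat_apply_def by (simp add: scaleR_sum_right)
  finally show "mat_apply (mat_mult A B) v i = mat_apply A (mat_apply B v) i" .
qed

lemma mat_apply_id [simp]: "mat_apply (\<lambda>i j. if i = j then 1 else 0) v = v"
  unfolding mat_apply_def by (simp add: if_distrib[where f="\<lambda>x. x *\<^sub>R _"] cong: if_cong)

lemma mat_apply_diff: "mat_apply A (\<lambda>i. v i - w i) = (\<lambda>i. mat_apply A v i - mat_apply A w i)"
  unfolding mat_apply_def by (auto simp: scaleR_diff_right sum_subtractf)

lemma mat_mult_assoc: "mat_mult (mat_mult A B) C = mat_mult A (mat_mult B C)"
  unfolding mat_mult_def
  by (auto simp: sum_distrib_left sum_distrib_right mult.assoc intro!: ext | subst sum.swap)+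

lemma mat_mult_id_left [simp]: "mat_mult (\<lambda>i j. if i = j then 1 else 0) B = B"
  unfolding mat_mult_def by (auto intro!: ext simp: if_distrib[where f="\<lambda>x. x * _"] cong: if_cong)

lemma mat_mult_id_right [simp]: "mat_mult B (\<lambda>i j. if i = j then 1 else 0) = B"
  unfolding mat_mult_def by (auto intro!: ext simp: if_distrib[where f="\<lambda>x. _ * x"] cong: if_cong)

lemma mat_pow_add: "mat_pow A (a + b) = mat_mult (mat_pow A a) (mat_pow A b)"
  by (induction a) (simp_all add: mat_mult_assoc)

lemma mat_mult_ge:
  assumes "\<And>i j. A i j \<ge> 0" "\<And>i j. B i j \<ge> 0"
  shows "mat_mult A B i j \<ge> A i l * B l j"
  unfolding mat_mult_def by (rule member_le_sum) (auto intro: mult_nonneg_nonneg assms)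

lemma norm_convex_comb_diff_le:
  fixes v :: "'n::finite \<Rightarrow> 'a::real_normed_vector"
  assumes p0: "\<And>j. p j \<ge> 0" and q0: "\<And>j. q j \<ge> 0"
    and p1: "(\<Sum>j\<in>UNIV. p j) = 1" and q1: "(\<Sum>j\<in>UNIV. q j) = 1"
    and D: "\<And>j j'. p j > 0 \<Longrightarrow> q j' > 0 \<Longrightarrow> norm (v j - v j') \<le> D"
  shows "norm ((\<Sum>j\<in>UNIV. p j *\<^sub>R v j) - (\<Sum>j\<in>UNIV. q j *\<^sub>R v j)) \<le> D"
proof -
  have expand_p: "(\<Sum>j\<in>UNIV. \<Sum>j'\<in>UNIV. (p j * q j') *\<^sub>R v j) = (\<Sum>j\<in>UNIV. p j *\<^sub>R v j)"
    by (simp add: scaleR_sum_left[symmetric] sum_distrib_left[symmetric] q1)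
  have expand_q: "(\<Sum>j\<in>UNIV. \<Sum>j'\<in>UNIV. (p j * q j') *\<^sub>R v j') = (\<Sum>j\<in>UNIV. q j *\<^sub>R v j)"
    by (subst sum.swap) (simp add: scaleR_sum_left[symmetric] sum_distrib_right[symmetric] p1)
  have "(\<Sum>j\<in>UNIV. p j *\<^sub>R v j) - (\<Sum>j\<in>UNIV. q j *\<^sub>R v j)
      = (\<Sum>j\<in>UNIV. \<Sum>j'\<in>UNIV. (p j * q j') *\<^sub>R (v j - v j'))"
    by (simp add: expand_p[symmetric] expand_q[symmetric] scaleR_diff_right sum_subtractf)
  also have "norm \<dots> \<le> (\<Sum>j\<in>UNIV. \<Sum>j'\<in>UNIV. norm ((p j * q j') *\<^sub>R (v j - v j')))"
    by (rule order_trans[OF norm_sum sum_mono[OF norm_sum]])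
  also have "\<dots> \<le> (\<Sum>j\<in>UNIV. \<Sum>j'\<in>UNIV. (p j * q j') * D)"
  proof (intro sum_mono)
    fix j j'
    show "norm ((p j * q j') *\<^sub>R (v j - v j')) \<le> p j * q j' * D"
    proof (cases "p j > 0 \<and> q j' > 0")
      case True
      then show ?thesis using D[of j j'] by (simp add: mult_left_mono)
    next
      case False
      then have "p j = 0 \<or> q j' = 0" using p0[of j] q0[of j'] by linarith
      then show ?thesis by auto
    qed
  qed
  also have "\<dots> = D"
    by (simp add: sum_distrib_right[symmetric] sum_distrib_left[symmetric] p1 q1)
  finally show ?thesis .
qed

lemma square_convex_comb_le:
  fixes w a :: "'n::finite \<Rightarrow> real"
  assumes w0: "\<And>j. w j \<ge> 0" and w1: "(\<Sum>j\<in>UNIV. w j) = 1"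
  shows "(\<Sum>j\<in>UNIV. w j * a j)\<^sup>2 \<le> (\<Sum>j\<in>UNIV. w j * (a j)\<^sup>2)"
proof -
  define m where "m = (\<Sum>j\<in>UNIV. w j * a j)"
  have "0 \<le> (\<Sum>j\<in>UNIV. w j * (a j - m)\<^sup>2)" by (intro sum_nonneg) (simp add: w0)
  also have "\<dots> = (\<Sum>j\<in>UNIV. w j * (a j)\<^sup>2) - 2 * m * (\<Sum>j\<in>UNIV. w j * a j) + m\<^sup>2 * (\<Sum>j\<in>UNIV. w j)"
    by (simp add: power2_diff algebra_simps sum.distrib sum_subtractf sum_distrib_left sum_distrib_right)
  also have "\<dots> = (\<Sum>j\<in>UNIV. w j * (a j)\<^sup>2) - m\<^sup>2" by (simp add: w1 m_def[symmetric] power2_eq_square)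
  finally show ?thesis unfolding m_def by simp
qed

lemma stochastic_row_split:
  fixes r :: "'n::finite \<Rightarrow> real" and v :: "'n \<Rightarrow> 'a::real_vector"
  assumes r0: "\<And>j. r j \<ge> 0" and r1: "(\<Sum>j\<in>UNIV. r j) = 1"
    and c: "0 < c" "c < 1" "c \<le> r i0"
  obtains q where "\<And>j. q j \<ge> 0" "(\<Sum>j\<in>UNIV. q j) = 1" "\<And>j. q j > 0 \<Longrightarrow> j = i0 \<or> r j > 0"
    "(\<Sum>j\<in>UNIV. r j *\<^sub>R v j) = (1 - c) *\<^sub>R (\<Sum>j\<in>UNIV. q j *\<^sub>R v j) + c *\<^sub>R v i0"
proof
  define q where "q j = (r j - (if j = i0 then c else 0)) / (1 - c)" for j
  have r_eq: "r j = (1 - c) * q j + (if j = i0 then c else 0)" for j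
    using c unfolding q_def by (simp add: field_simps)
  show "q j \<ge> 0" for j
    using r0[of j] c unfolding q_def by auto
  show "(\<Sum>j\<in>UNIV. q j) = 1"
    using c unfolding q_def by (simp add: sum_divide_distrib[symmetric] sum_subtractf r1)
  show "q j > 0 \<Longrightarrow> j = i0 \<or> r j > 0" for j
    using r_eq[of j] c by (cases "j = i0") auto
  have "(\<Sum>j\<in>UNIV. r j *\<^sub>R v j)
      = (\<Sum>j\<in>UNIV. (1 - c) *\<^sub>R (q j *\<^sub>R v j)) + (\<Sum>j\<in>UNIV. if j = i0 then c *\<^sub>R v j else 0)"
    by (subst r_eq) (simp add: scaleR_add_left sum.distrib if_distrib[where f="\<lambda>x. x *\<^sub>R _"] cong: if_cong)
  then show "(\<Sum>j\<in>UNIV. r j *\<^sub>R v j) = (1 - c) *\<^sub>R (\<Sum>j\<in>UNIV. q j *\<^sub>R v j) + c *\<^sub>R v i0"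
    by (simp add: scaleR_sum_right)
qed

lemma sum_power_div_le:
  fixes c :: real and p :: nat
  assumes c0: "0 \<le> c" and c1: "c < 1" and p: "p > 0"
  shows "(\<Sum>j<n. c ^ (j div p)) \<le> real p / (1 - c)"
proof -
  have blocks: "(\<Sum>j<p * q. c ^ (j div p)) = real p * (\<Sum>l<q. c ^ l)" for q
  proof (induction q)
    case 0 then show ?case by simp
  next
    case (Suc q)
    have split: "{..<p * Suc q} = {..<p * q} \<union> {p * q..<p * q + p}" by auto
    have "(\<Sum>j\<in>{p * q..<p * q + p}. c ^ (j div p)) = (\<Sum>j\<in>{p * q..<p * q + p}. c ^ q)"
    proof (rule sum.cong)
      fix j assume "j \<in> {p * q..<p * q + p}"
      then have "j div p = q" using p by (auto intro: div_nat_eqI simp: algebra_simps)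
      then show "c ^ (j div p) = c ^ q" by simp
    qed simp
    then show ?case unfolding split
      by (subst sum.union_disjoint) (auto simp: Suc algebra_simps)
  qed
  have "(\<Sum>l<n. c ^ l) \<le> 1 / (1 - c)"
    using sum_gp_strict[of c n] c0 c1 by (simp add: divide_right_mono)
  then have "real p * (\<Sum>l<n. c ^ l) \<le> real p * (1 / (1 - c))" by (rule mult_left_mono) simp
  moreover have "(\<Sum>j<n. c ^ (j div p)) \<le> (\<Sum>j<p * n. c ^ (j div p))"
    by (rule sum_mono2) (use p c0 in auto)
  ultimately show ?thesis by (simp add: blocks)
qed

lemma sum_shifted_le:
  fixes h :: "nat \<Rightarrow> real"
  assumes h0: "\<And>j. h j \<ge> 0"
  shows "(\<Sum>t<T. if s < t then h (t - 1 - s) else 0) \<le> (\<Sum>j<T. h j)"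
proof -
  have "(\<Sum>t<T. if s < t then h (t - 1 - s) else 0) = (\<Sum>t\<in>{t\<in>{..<T}. s < t}. h (t - 1 - s))"
    by (rule sum.inter_filter[symmetric]) simp
  also have "{t\<in>{..<T}. s < t} = {Suc s..<T}" by auto
  also have "(\<Sum>t\<in>{Suc s..<T}. h (t - 1 - s)) \<le> (\<Sum>j<T. h j)"
  proof (cases "Suc s \<le> T")
    case True
    have "(\<Sum>t\<in>{Suc s..<T}. h (t - 1 - s)) = (\<Sum>t\<in>{0 + Suc s..<(T - Suc s) + Suc s}. h (t - 1 - s))"
      using True by simp
    also have "\<dots> = (\<Sum>j\<in>{0..<T - Suc s}. h j)"
      by (subst sum.shift_bounds_nat_ivl) simp
    also have "\<dots> \<le> (\<Sum>j<T. h j)"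
      by (rule sum_mono2) (auto simp: h0)
    finally show ?thesis .
  qed (simp add: sum_nonneg h0)
  finally show ?thesis .
qed

lemma sum_decay_period_split:
  fixes b :: "nat \<Rightarrow> real" and c :: real
  assumes p: "p > 0"
  shows "(\<Sum>s<t + p. c ^ ((t + p - 1 - s) div p) * b s)
      = c * (\<Sum>s<t. c ^ ((t - 1 - s) div p) * b s) + (\<Sum>s<p. b (t + s))"
proof -
  have "c * (\<Sum>s<t. c ^ ((t - 1 - s) div p) * b s) = (\<Sum>s<t. c ^ ((t + p - 1 - s) div p) * b s)"
    unfolding sum_distrib_left
  proof (rule sum.cong)
    fix s assume "s \<in> {..<t}"
    then have "t + p - 1 - s = (t - 1 - s) + p" by simp
    then have "(t + p - 1 - s) div p = Suc ((t - 1 - s) div p)"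
      using div_add_self2[of p "t - 1 - s"] p by (simp only:)
    then show "c * (c ^ ((t - 1 - s) div p) * b s) = c ^ ((t + p - 1 - s) div p) * b s" by simp
  qed simp
  moreover have "(\<Sum>s<p. b (t + s)) = (\<Sum>s\<in>{t..<t + p}. c ^ ((t + p - 1 - s) div p) * b s)"
  proof -
    have "(\<Sum>s\<in>{t..<t + p}. b s) = (\<Sum>s\<in>{0 + t..<p + t}. b s)" by (simp add: add.commute)
    also have "\<dots> = (\<Sum>s<p. b (s + t))" by (simp only: sum.shift_bounds_nat_ivl atLeast0LessThan)
    finally have "(\<Sum>s<p. b (t + s)) = (\<Sum>s\<in>{t..<t + p}. b s)" by (simp add: add.commute)
    also have "\<dots> = (\<Sum>s\<in>{t..<t + p}. c ^ ((t + p - 1 - s) div p) * b s)"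
    proof (rule sum.cong)
      fix s assume "s \<in> {t..<t + p}"
      then have "(t + p - 1 - s) div p = 0" by (auto simp: div_eq_0_iff)
      then show "b s = c ^ ((t + p - 1 - s) div p) * b s" by simp
    qed simp
    finally show ?thesis .
  qed
  moreover have "(\<Sum>s<t + p. F s) = (\<Sum>s<t. F s) + (\<Sum>s\<in>{t..<t + p}. F s)" for F :: "nat \<Rightarrow> real"
    by (simp add: atLeast0LessThan[symmetric] sum.atLeastLessThan_concat)
  ultimately show ?thesis by simp
qed

lemma sum_weighted_pairs:
  fixes a F :: "nat \<Rightarrow> real"
  shows "2 * (\<Sum>t<Suc T. a t * F t) = (\<Sum>t<T. a t * (F t + F (Suc t))) + a 0 * F 0 + a T * F T
     + (\<Sum>t<T. (a (Suc t) - a t) * F (Suc t))"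
  by (induction T) (simp_all add: algebra_simps)

lemma boundary_terms_ge:
  fixes a F :: "nat \<Rightarrow> real"
  assumes F: "\<And>t. \<bar>F t\<bar> \<le> M"
    and a_nonneg: "\<And>t. a t \<ge> 0" and a_antimono: "\<And>s t. s \<le> t \<Longrightarrow> a t \<le> a s"
  shows "a 0 * F 0 + a T * F T + (\<Sum>t<T. (a (Suc t) - a t) * F (Suc t)) \<ge> - (2 * (a 0 * M))"
proof -
  have "(a (Suc t) - a t) * M \<le> (a (Suc t) - a t) * F (Suc t)" for t
    using F[of "Suc t"] a_antimono[of t "Suc t"] by (intro mult_left_mono_neg) auto
  then have "(\<Sum>t<T. (a (Suc t) - a t) * M) \<le> (\<Sum>t<T. (a (Suc t) - a t) * F (Suc t))"
    by (rule sum_mono)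
  moreover have "(\<Sum>t<T. (a (Suc t) - a t) * M) = a T * M - a 0 * M"
    unfolding sum_distrib_right[symmetric] sum_lessThan_telescope by (simp add: left_diff_distrib)
  moreover have boundary: "- (a t * M) \<le> a t * F t" for t
    using F[of t] mult_left_mono[of "- M" "F t" "a t"] a_nonneg[of t] by simp
  ultimately show ?thesis using boundary[of 0] boundary[of T] by linarith
qed

lemma sum_indicator_prefix_le:
  fixes K :: real
  assumes "K \<ge> 0"
  shows "(\<Sum>t<T. if t < t0 then K else 0) \<le> real t0 * K"
proof -
  have "(\<Sum>t<T. if t < t0 then K else 0) = real (min T t0) * K"
    by (induction T) (auto simp: min_def algebra_simps)
  also have "\<dots> \<le> real t0 * K" using assms by (intro mult_right_mono) auto
  finally show ?thesis .
qed

lemma power2_norm_diff_scaleR: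
  fixes u v :: "'a::real_inner"
  shows "(norm (u - c *\<^sub>R v))\<^sup>2 = (norm u)\<^sup>2 - 2 * c * (v \<bullet> u) + c\<^sup>2 * (norm v)\<^sup>2"
  unfolding power2_norm_eq_inner
  by (simp add: inner_diff_left inner_diff_right inner_commute algebra_simps power2_eq_square)

lemma power2_norm_add_scaleR:
  fixes u v :: "'a::real_inner"
  shows "(norm (u + c *\<^sub>R v))\<^sup>2 = (norm u)\<^sup>2 + 2 * c * (v \<bullet> u) + c\<^sup>2 * (norm v)\<^sup>2"
  using power2_norm_diff_scaleR[of u "- c" v] by simp

lemma eventually_le_mult_sqrt:
  fixes K c :: real
  assumes c: "c > 0"
  shows "eventually (\<lambda>T. K \<le> c * sqrt (real T)) sequentially"
proof (rule eventually_sequentiallyI[of "nat \<lceil>(K / c)\<^sup>2\<rceil>"])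
  fix T assume "nat \<lceil>(K / c)\<^sup>2\<rceil> \<le> T"
  then have "sqrt ((K / c)\<^sup>2) \<le> sqrt (real T)" by (intro real_sqrt_le_mono) linarith
  then have "K / c \<le> sqrt (real T)" by (metis real_sqrt_abs abs_ge_self order_trans)
  then show "K \<le> c * sqrt (real T)" using c by (simp add: divide_le_eq mult.commute)
qed

lemma eventually_le_ln: "eventually (\<lambda>T. c \<le> ln (real T)) sequentially"
proof (rule eventually_sequentiallyI[of "nat \<lceil>exp c\<rceil>"])
  fix T assume "nat \<lceil>exp c\<rceil> \<le> T"
  then have "exp c \<le> real T" by linarith
  then show "c \<le> ln (real T)" by (metis exp_gt_zero ln_exp ln_le_cancel_iff order_less_le_trans)
qed

text \<open>From \<open>ln y \<le> y - 1\<close> at \<open>y = e \<surd>T\<close>: a logarithm is eventually below any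
  positive multiple of the square root.\<close>

lemma eventually_affine_ln_le_sqrt:
  fixes A B c :: real
  assumes c: "c > 0"
  shows "eventually (\<lambda>T. A + B * ln (real T) \<le> c * sqrt (real T)) sequentially"
proof -
  define e where "e = c / (4 * \<bar>B\<bar> + 1)"
  have e: "e > 0" unfolding e_def using c by (simp add: add_nonneg_pos)
  have Be: "2 * \<bar>B\<bar> * e \<le> c / 2"
    using c unfolding e_def by (simp add: field_simps)
  have "eventually (\<lambda>T. \<bar>A\<bar> + 2 * \<bar>B\<bar> * (- 1 - ln e) \<le> (c / 2) * sqrt (real T)) sequentially"
    by (rule eventually_le_mult_sqrt) (use c in simp)
  moreover have "eventually (\<lambda>T::nat. T \<ge> 1) sequentially" by (rule eventually_ge_at_top)
  ultimately show ?thesis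
  proof eventually_elim
    case (elim T)
    have s: "sqrt (real T) > 0" using elim(2) by simp
    have "ln e + ln (real T) / 2 = ln (e * sqrt (real T))"
      using e s elim(2) by (simp add: ln_mult ln_sqrt)
    also have "\<dots> \<le> e * sqrt (real T) - 1" using e s by (intro ln_le_minus_one) simp
    finally have lnT: "ln (real T) \<le> 2 * (e * sqrt (real T) - 1 - ln e)" by simp
    have "A + B * ln (real T) \<le> \<bar>A\<bar> + \<bar>B\<bar> * ln (real T)"
      using elim(2) by (intro add_mono) (auto simp: abs_mult intro: mult_right_mono)
    also have "\<dots> \<le> \<bar>A\<bar> + \<bar>B\<bar> * (2 * (e * sqrt (real T) - 1 - ln e))"
      using lnT by (intro add_left_mono mult_left_mono) auto
    also have "\<dots> = \<bar>A\<bar> + 2 * \<bar>B\<bar> * (- 1 - ln e) + (2 * \<bar>B\<bar> * e) * sqrt (real T)"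
      by (simp add: algebra_simps)
    also have "\<dots> \<le> (c / 2) * sqrt (real T) + (c / 2) * sqrt (real T)"
      using elim(1) Be by (intro add_mono mult_right_mono) auto
    finally show ?case by simp
  qed
qed

lemma nonneg_orthant_closed: "closed (nonneg_orthant :: (real^'m::finite) set)"
proof -
  have "(nonneg_orthant :: (real^'m) set) = (\<Inter>k. {v::real^'m. 0 \<le> v $ k})"
    unfolding nonneg_orthant_def by auto
  moreover have "closed {v::real^'m. 0 \<le> v $ k}" for k
    by (intro closed_Collect_le continuous_intros)
  ultimately show ?thesis by (metis closed_INT)
qed

lemma nonneg_orthant_convex: "convex (nonneg_orthant :: (real^'m::finite) set)"
  unfolding nonneg_orthant_def convex_def by auto

lemma pos_part_in_nonneg_orthant: "pos_part v \<in> nonneg_orthant"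
  unfolding pos_part_def nonneg_orthant_def by simp

lemma power2_norm_vec: "(norm (x :: real^'m::finite))\<^sup>2 = (\<Sum>k\<in>UNIV. (x $ k)\<^sup>2)"
  by (subst power2_norm_eq_inner) (simp add: inner_vec_def power2_eq_square)

lemma inner_pos_part_self: "pos_part v \<bullet> v = (norm (pos_part v))\<^sup>2"
  unfolding power2_norm_vec inner_vec_def pos_part_def
  by (rule sum.cong) (auto simp: power2_eq_square max_def)

lemma closest_point_nonneg_orthant: "closest_point nonneg_orthant v = pos_part v"
proof -
  have "dist v (pos_part v) \<le> dist v z" if z: "z \<in> nonneg_orthant" for z
  proof -
    have "(norm (v - pos_part v))\<^sup>2 \<le> (norm (v - z))\<^sup>2"
      unfolding power2_norm_vec
    proof (rule sum_mono)
      fix k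
      have "0 \<le> z $ k" using z unfolding nonneg_orthant_def by simp
      show "((v - pos_part v) $ k)\<^sup>2 \<le> ((v - z) $ k)\<^sup>2"
      proof (cases "v $ k \<ge> 0")
        case False
        then have "0 \<le> z $ k * (z $ k - 2 * v $ k)" using \<open>0 \<le> z $ k\<close> by simp
        then show ?thesis using False unfolding pos_part_def by (simp add: power2_eq_square algebra_simps)
      qed (simp add: pos_part_def)
    qed
    then show ?thesis unfolding dist_norm by (rule power2_le_imp_le) simp
  qed
  then show ?thesis
    by (intro closest_point_unique[symmetric] nonneg_orthant_convex nonneg_orthant_closed
        pos_part_in_nonneg_orthant) blast
qed

lemma norm_closest_point_minus_le:
  fixes S :: "'a::euclidean_space set"
  assumes "convex S" "closed S" "z \<in> S"
  shows "norm (closest_point S w - z) \<le> norm (w - z)"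
proof -
  have "dist (closest_point S w) (closest_point S z) \<le> dist w z"
    using closest_point_lipschitz[OF assms(1,2)] assms(3) by blast
  then show ?thesis using closest_point_self[OF assms(3)] by (simp add: dist_norm)
qed

lemma inner_gvec: "(l::real^'m::finite) \<bullet> gvec g y = (\<Sum>k\<in>UNIV. l $ k * g k y)"
  by (simp add: inner_vec_def gvec_def)

section \<open>Consensus on a connected graph\<close>

locale mixing_graph =
  fixes W :: "'n::finite \<Rightarrow> 'n \<Rightarrow> real" and E :: "('n \<times> 'n) set"
  assumes E_sym: "sym E"
    and E_connected: "\<And>i j. (i, j) \<in> E\<^sup>*"
    and W_nonneg: "\<And>i j. W i j \<ge> 0"
    and W_rows: "\<And>i. (\<Sum>j\<in>UNIV. W i j) = 1"
    and W_cols: "\<And>j. (\<Sum>i\<in>UNIV. W i j) = 1"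
    and W_edge: "\<And>i j. (i, j) \<in> E \<Longrightarrow> W i j > 0"
    and W_nonedge: "\<And>i j. (i, j) \<notin> E \<Longrightarrow> W i j = 0"
begin

lemma W_pos_sym: "W i j > 0 \<Longrightarrow> W j i > 0"
  using W_nonedge[of i j] W_edge[of j i] E_sym by (auto simp: sym_def)

lemma W_le_1: "W i j \<le> 1"
  using member_le_sum[of j UNIV "W i"] W_nonneg W_rows by simp

lemma W_row_has_pos: "\<exists>l. W i l > 0"
proof (rule ccontr)
  assume "\<nexists>l. W i l > 0"
  then have "\<And>l. W i l = 0" using W_nonneg by (metis less_eq_real_def)
  then show False using W_rows[of i] by simp
qed

lemma mat_pow_nonneg: "mat_pow W k i j \<ge> 0"
  by (induction k arbitrary: i j) (simp_all add: mat_mult_def sum_nonneg W_nonneg)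

lemma mat_pow_row_sum: "(\<Sum>j\<in>UNIV. mat_pow W k i j) = 1"
proof (induction k arbitrary: i)
  case (Suc k)
  have "(\<Sum>j\<in>UNIV. mat_pow W (Suc k) i j) = (\<Sum>l\<in>UNIV. W i l * (\<Sum>j\<in>UNIV. mat_pow W k l j))"
    by (simp add: mat_mult_def sum_distrib_left) (rule sum.swap)
  then show ?case using Suc W_rows by simp
qed simp

lemma mat_pow_le_1: "mat_pow W k i j \<le> 1"
  using member_le_sum[of j UNIV "mat_pow W k i"] mat_pow_nonneg mat_pow_row_sum by simp

lemma mat_pow_add_ge: "mat_pow W (a + b) i j \<ge> mat_pow W a i l * mat_pow W b l j"
  unfolding mat_pow_add by (rule mat_mult_ge) (auto simp: mat_pow_nonneg)

lemma mat_pow_add_pos: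
  "mat_pow W a i l > 0 \<Longrightarrow> mat_pow W b l j > 0 \<Longrightarrow> mat_pow W (a + b) i j > 0"
  using mat_pow_add_ge[of a i l b j] by (meson mult_pos_pos order_less_le_trans)

lemma mat_pow_Suc_pos_imp: "mat_pow W (Suc k) i j > 0 \<Longrightarrow> \<exists>l. W i l > 0 \<and> mat_pow W k l j > 0"
proof (rule ccontr)
  assume pos: "mat_pow W (Suc k) i j > 0" and "\<not> (\<exists>l. W i l > 0 \<and> mat_pow W k l j > 0)"
  then have zero: "\<And>l. W i l * mat_pow W k l j = 0"
    using W_nonneg mat_pow_nonneg by (metis less_eq_real_def mult_eq_0_iff)
  have "mat_pow W (Suc k) i j = 0"
    unfolding mat_pow.simps mat_mult_def by (rule sum.neutral) (use zero in blast)
  then show False using pos by simp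
qed

lemma mat_pow_pos_sym: "mat_pow W k i j > 0 \<Longrightarrow> mat_pow W k j i > 0"
proof (induction k arbitrary: i j)
  case (Suc k)
  then obtain l where "W i l > 0" "mat_pow W k l j > 0" using mat_pow_Suc_pos_imp by blast
  then show ?case
    using mat_pow_add_pos[of k j l 1 i] Suc.IH W_pos_sym by simp
qed (auto split: if_splits)

lemma mat_pow_pos_of_rtrancl: "(i, j) \<in> E\<^sup>* \<Longrightarrow> \<exists>k. mat_pow W k i j > 0"
proof (induction rule: rtrancl_induct)
  case base
  then show ?case by (rule exI[of _ 0]) simp
next
  case (step y z)
  then show ?case using mat_pow_add_pos[of _ i y 1 z] W_edge by fastforce
qed

text \<open>When the graph is bipartite no power of W becomes positive, so disagreement can only be
  controlled between nodes joined by walks of even length.\<close>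

definition even_linked :: "'n \<Rightarrow> 'n \<Rightarrow> bool" where
  "even_linked i j \<longleftrightarrow> (\<exists>k. mat_pow W (2 * k) i j > 0)"

lemma even_linked_refl: "even_linked i i"
  unfolding even_linked_def by (rule exI[of _ 0]) simp

lemma even_linked_sym: "even_linked i j \<Longrightarrow> even_linked j i"
  unfolding even_linked_def using mat_pow_pos_sym by blast

lemma even_linked_trans: "even_linked i j \<Longrightarrow> even_linked j l \<Longrightarrow> even_linked i l"
  unfolding even_linked_def
  by (metis distrib_left_numeral mat_pow_add_pos)

lemma even_linked_neighbours:
  assumes "W i j > 0" "W i' j' > 0" "even_linked i i'"
  shows "even_linked j j'"
proof -
  obtain k where "mat_pow W (2 * k) i i' > 0" using assms(3) unfolding even_linked_def by blast
  then have "mat_pow W (1 + 2 * k + 1) j j' > 0"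
    using assms(1,2) W_pos_sym mat_pow_add_pos[of 1 j i "2 * k" i']
      mat_pow_add_pos[of "1 + 2 * k" j i' 1 j'] by simp
  then have "mat_pow W (2 * (k + 1)) j j' > 0" by (simp add: algebra_simps)
  then show ?thesis unfolding even_linked_def by blast
qed

lemma even_linked_or_neighbour: "W i' j > 0 \<Longrightarrow> even_linked i i' \<or> even_linked i j"
proof -
  assume w: "W i' j > 0"
  obtain k where k: "mat_pow W k i i' > 0" using mat_pow_pos_of_rtrancl E_connected by blast
  show ?thesis
  proof (cases "even k")
    case True
    then show ?thesis using k unfolding even_linked_def by (auto elim: evenE)
  next
    case False
    then obtain m where "k + 1 = 2 * (m + 1)" by (auto elim: oddE)
    then have "mat_pow W (2 * (m + 1)) i j > 0" using mat_pow_add_pos[OF k, of 1 j] w by simp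
    then show ?thesis unfolding even_linked_def by blast
  qed
qed

lemma mat_pow_even_pos_mono:
  "mat_pow W (2 * k) i j > 0 \<Longrightarrow> k \<le> k' \<Longrightarrow> mat_pow W (2 * k') i j > 0"
proof (induction k')
  case (Suc k')
  obtain l where "W i l > 0" using W_row_has_pos by blast
  then have diag: "mat_pow W 2 i i > 0"
    using mat_pow_add_pos[of 1 i l 1 i] W_pos_sym by (simp add: numeral_2_eq_2)
  show ?case
  proof (cases "k \<le> k'")
    case True
    then show ?thesis using Suc mat_pow_add_pos[OF diag, of "2 * k'" j] by simp
  next
    case False
    then show ?thesis using Suc by (simp add: le_Suc_eq)
  qed
qed simp

definition half_period :: nat where
  "half_period = Max ((\<lambda>(i,j). LEAST k. mat_pow W (2*k) i j > 0) ` {(i,j). even_linked i j}) + 1"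

definition period :: nat where
  "period = 2 * half_period"

lemma period_pos: "period > 0"
  unfolding period_def half_period_def by simp

lemma even_linked_iff: "even_linked i j \<longleftrightarrow> mat_pow W period i j > 0"
proof
  assume r: "even_linked i j"
  let ?k = "LEAST k. mat_pow W (2*k) i j > 0"
  have "mat_pow W (2 * ?k) i j > 0" using r unfolding even_linked_def by (rule LeastI_ex)
  moreover have "?k \<le> half_period"
    unfolding half_period_def using r by (intro trans_le_add1 Max_ge) auto
  ultimately show "mat_pow W period i j > 0" unfolding period_def by (rule mat_pow_even_pos_mono)
qed (auto simp: even_linked_def period_def)

definition contraction :: real where
  "contraction = Min ((\<lambda>(i,j). mat_pow W period i j) ` {(i,j). even_linked i j}) / 2"

lemma contraction_pos: "contraction > 0"
  and contraction_lt_1: "contraction < 1"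
  and contraction_le: "even_linked i j \<Longrightarrow> contraction \<le> mat_pow W period i j"
proof -
  let ?M = "Min ((\<lambda>(i,j). mat_pow W period i j) ` {(i,j). even_linked i j})"
  have le: "?M \<le> mat_pow W period i j" if "even_linked i j" for i j
    using that by (intro Min_le) auto
  have "?M \<in> (\<lambda>(i,j). mat_pow W period i j) ` {(i,j). even_linked i j}"
    by (rule Min_in) (auto intro: even_linked_refl)
  then have "?M > 0" using even_linked_iff by auto
  moreover have "?M \<le> 1" using le[OF even_linked_refl] mat_pow_le_1 order_trans by blast
  ultimately show "contraction > 0" "contraction < 1" unfolding contraction_def by auto
  show "even_linked i j \<Longrightarrow> contraction \<le> mat_pow W period i j"
    using le \<open>?M > 0\<close> unfolding contraction_def by fastforce
qed

definition spread :: "('n \<Rightarrow> 'a::real_normed_vector) \<Rightarrow> real" where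
  "spread v = Max ((\<lambda>(i,j). norm (v i - v j)) ` {(i,j). even_linked i j})"

lemma spread_ge: "even_linked i j \<Longrightarrow> norm (v i - v j) \<le> spread v"
  unfolding spread_def by (rule Max_ge) auto

lemma spread_leI: "(\<And>i j. even_linked i j \<Longrightarrow> norm (v i - v j) \<le> c) \<Longrightarrow> spread v \<le> c"
  unfolding spread_def by (subst Max_le_iff) (auto intro: even_linked_refl)

lemma spread_nonneg: "spread v \<ge> 0"
  using spread_ge[OF even_linked_refl, of v] by (metis norm_ge_zero order_trans)

lemma spread_const: "spread (\<lambda>i. c) = 0"
  using spread_leI[of "\<lambda>i. c" 0] spread_nonneg[of "\<lambda>i. c"] by simp

lemma spread_add_le: "spread (\<lambda>i. v i + w i) \<le> spread v + spread w"
proof (rule spread_leI)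
  fix i j assume r: "even_linked i j"
  have "norm ((v i + w i) - (v j + w j)) \<le> norm (v i - v j) + norm (w i - w j)"
    using norm_triangle_ineq[of "v i - v j" "w i - w j"] by (simp add: algebra_simps)
  then show "norm ((v i + w i) - (v j + w j)) \<le> spread v + spread w"
    using spread_ge[OF r, of v] spread_ge[OF r, of w] by simp
qed

lemma spread_le_of_norm_le:
  assumes "\<And>i. norm (v i) \<le> c"
  shows "spread v \<le> 2 * c"
proof (rule spread_leI)
  fix i j
  show "norm (v i - v j) \<le> 2 * c"
    using norm_triangle_ineq4[of "v i" "v j"] assms[of i] assms[of j] by simp
qed

lemma spread_mat_apply_W_le: "spread (mat_apply W v) \<le> spread v"
proof (rule spread_leI)
  fix i i' assume r: "even_linked i i'"
  show "norm (mat_apply W v i - mat_apply W v i') \<le> spread v"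
    unfolding mat_apply_def
    by (rule norm_convex_comb_diff_le)
      (auto simp: W_nonneg W_rows intro!: spread_ge even_linked_neighbours[OF _ _ r])
qed

text \<open>Both rows i and i' of W^period put mass at least contraction on node i, and this common
  mass cancels in the difference.\<close>

lemma spread_mat_apply_period_le:
  "spread (mat_apply (mat_pow W period) v) \<le> (1 - contraction) * spread v"
proof (rule spread_leI)
  fix i i' assume r: "even_linked i i'"
  let ?P = "mat_pow W period" and ?c = contraction
  have c: "0 < ?c" "?c < 1" by (fact contraction_pos contraction_lt_1)+
  obtain p where p: "\<And>j. p j \<ge> 0" "(\<Sum>j\<in>UNIV. p j) = 1" "\<And>j. p j > 0 \<Longrightarrow> j = i \<or> ?P i j > 0"
    "(\<Sum>j\<in>UNIV. ?P i j *\<^sub>R v j) = (1 - ?c) *\<^sub>R (\<Sum>j\<in>UNIV. p j *\<^sub>R v j) + ?c *\<^sub>R v i"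
    by (rule stochastic_row_split[where v=v, OF mat_pow_nonneg mat_pow_row_sum c
          contraction_le[OF even_linked_refl[of i]]]) blast
  obtain q where q: "\<And>j. q j \<ge> 0" "(\<Sum>j\<in>UNIV. q j) = 1" "\<And>j. q j > 0 \<Longrightarrow> j = i \<or> ?P i' j > 0"
    "(\<Sum>j\<in>UNIV. ?P i' j *\<^sub>R v j) = (1 - ?c) *\<^sub>R (\<Sum>j\<in>UNIV. q j *\<^sub>R v j) + ?c *\<^sub>R v i"
    by (rule stochastic_row_split[where v=v, OF mat_pow_nonneg mat_pow_row_sum c
          contraction_le[OF even_linked_sym[OF r]]]) blast
  have "norm ((\<Sum>j\<in>UNIV. p j *\<^sub>R v j) - (\<Sum>j\<in>UNIV. q j *\<^sub>R v j)) \<le> spread v"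
  proof (rule norm_convex_comb_diff_le[OF p(1) q(1) p(2) q(2)])
    fix j j' assume "p j > 0" "q j' > 0"
    then have "even_linked i j" "even_linked i' j'"
      using p(3) q(3) even_linked_iff even_linked_refl even_linked_sym[OF r] by blast+
    then show "norm (v j - v j') \<le> spread v"
      using r by (blast intro: spread_ge even_linked_trans even_linked_sym)
  qed
  moreover have "mat_apply ?P v i - mat_apply ?P v i'
      = (1 - ?c) *\<^sub>R ((\<Sum>j\<in>UNIV. p j *\<^sub>R v j) - (\<Sum>j\<in>UNIV. q j *\<^sub>R v j))"
    unfolding mat_apply_def p(4) q(4) by (simp add: scaleR_diff_right)
  ultimately show "norm (mat_apply ?P v i - mat_apply ?P v i') \<le> (1 - ?c) * spread v"
    using c by (simp add: mult_left_mono)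
qed

lemma norm_minus_mat_apply_le_if_not_linked:
  assumes "\<not> even_linked i l"
  shows "norm (v i - mat_apply W v l) \<le> spread v"
proof -
  have "v i = (\<Sum>j\<in>UNIV. (if j = i then 1 else 0) *\<^sub>R v j)"
    by (simp add: if_distrib[where f="\<lambda>x. x *\<^sub>R _"] cong: if_cong)
  also have "norm (\<dots> - mat_apply W v l) \<le> spread v"
    unfolding mat_apply_def
  proof (rule norm_convex_comb_diff_le)
    fix j j' assume "(if j = i then 1 else 0::real) > 0" and "W l j' > 0"
    then show "norm (v j - v j') \<le> spread v"
      using even_linked_or_neighbour[of l j' i] assms by (auto split: if_splits intro: spread_ge)
  qed (simp_all add: W_nonneg W_rows)
  finally show ?thesis .
qed

text \<open>Averaging two consecutive consensus steps removes the parity obstruction: for each pair of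
  nodes either they are even-linked, or each is even-linked to every neighbour of the other.\<close>

lemma norm_midpoint_diff_le:
  "norm ((1/2) *\<^sub>R (v i + mat_apply W v i) - (1/2) *\<^sub>R (v l + mat_apply W v l)) \<le> spread v"
proof (cases "even_linked i l")
  case True
  have "(1/2) *\<^sub>R (v i + mat_apply W v i) - (1/2) *\<^sub>R (v l + mat_apply W v l)
      = (1/2) *\<^sub>R ((v i - v l) + (mat_apply W v i - mat_apply W v l))"
    by (simp add: algebra_simps)
  also have "norm \<dots> \<le> (1/2) * (norm (v i - v l) + norm (mat_apply W v i - mat_apply W v l))"
    using norm_triangle_ineq by simp
  also have "\<dots> \<le> spread v"
    using spread_ge[OF True, of v] spread_ge[OF True, of "mat_apply W v"] spread_mat_apply_W_le[of v]
    by simp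
  finally show ?thesis .
next
  case False
  have "(1/2) *\<^sub>R (v i + mat_apply W v i) - (1/2) *\<^sub>R (v l + mat_apply W v l)
      = (1/2) *\<^sub>R ((v i - mat_apply W v l) - (v l - mat_apply W v i))"
    by (simp add: algebra_simps)
  also have "norm \<dots> \<le> (1/2) * (norm (v i - mat_apply W v l) + norm (v l - mat_apply W v i))"
    using norm_triangle_ineq4 by simp
  also have "\<dots> \<le> spread v"
    using norm_minus_mat_apply_le_if_not_linked[OF False, of v]
      norm_minus_mat_apply_le_if_not_linked[of l i v] False even_linked_sym by fastforce
  finally show ?thesis .
qed

lemma norm_midpoint_minus_mean_le:
  "norm ((1/2) *\<^sub>R (v i + mat_apply W v i) - (1 / real CARD('n)) *\<^sub>R (\<Sum>l\<in>UNIV. v l)) \<le> spread v"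
proof -
  define m where "m l = (1/2) *\<^sub>R (v l + mat_apply W v l)" for l
  let ?N = "real CARD('n)"
  have "(\<Sum>l\<in>UNIV. mat_apply W v l) = (\<Sum>l\<in>UNIV. v l)"
    unfolding mat_apply_def by (subst sum.swap) (simp add: scaleR_sum_left[symmetric] W_cols)
  then have "(\<Sum>l\<in>UNIV. m l) = (\<Sum>l\<in>UNIV. v l)"
    unfolding m_def by (simp add: scaleR_sum_right[symmetric] sum.distrib)
  then have "m i - (1 / ?N) *\<^sub>R (\<Sum>l\<in>UNIV. v l) = (1 / ?N) *\<^sub>R (\<Sum>l\<in>UNIV. m i - m l)"
    by (simp add: sum_subtractf scaleR_diff_right sum_constant_scaleR)
  also have "norm \<dots> \<le> (1 / ?N) * (\<Sum>l\<in>UNIV. norm (m i - m l))"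
    using norm_sum[of "\<lambda>l. m i - m l" UNIV] by (simp add: divide_right_mono)
  also have "\<dots> \<le> (1 / ?N) * (\<Sum>l\<in>(UNIV::'n set). spread v)"
    by (intro mult_left_mono sum_mono) (auto simp: m_def norm_midpoint_diff_le)
  also have "\<dots> = spread v" by simp
  finally show ?thesis unfolding m_def .
qed

lemma sum_sq_dist_mat_apply_le:
  fixes u :: "'n \<Rightarrow> 'a::real_normed_vector"
  shows "(\<Sum>i\<in>UNIV. (norm ((\<Sum>j\<in>UNIV. W i j *\<^sub>R u j) - z))\<^sup>2) \<le> (\<Sum>j\<in>UNIV. (norm (u j - z))\<^sup>2)"
proof -
  have "(norm ((\<Sum>j\<in>UNIV. W i j *\<^sub>R u j) - z))\<^sup>2 \<le> (\<Sum>j\<in>UNIV. W i j * (norm (u j - z))\<^sup>2)" for i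
  proof -
    have "(\<Sum>j\<in>UNIV. W i j *\<^sub>R u j) - z = (\<Sum>j\<in>UNIV. W i j *\<^sub>R (u j - z))"
      by (simp add: scaleR_diff_right sum_subtractf scaleR_sum_left[symmetric] W_rows)
    then have "norm ((\<Sum>j\<in>UNIV. W i j *\<^sub>R u j) - z) \<le> (\<Sum>j\<in>UNIV. W i j * norm (u j - z))"
      using norm_sum[of "\<lambda>j. W i j *\<^sub>R (u j - z)" UNIV] by (simp add: W_nonneg)
    then have "(norm ((\<Sum>j\<in>UNIV. W i j *\<^sub>R u j) - z))\<^sup>2 \<le> (\<Sum>j\<in>UNIV. W i j * norm (u j - z))\<^sup>2"
      by (rule power_mono) simp
    also have "\<dots> \<le> (\<Sum>j\<in>UNIV. W i j * (norm (u j - z))\<^sup>2)"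
      by (rule square_convex_comb_le) (simp_all add: W_nonneg W_rows)
    finally show ?thesis .
  qed
  then have "(\<Sum>i\<in>UNIV. (norm ((\<Sum>j\<in>UNIV. W i j *\<^sub>R u j) - z))\<^sup>2)
      \<le> (\<Sum>i\<in>UNIV. \<Sum>j\<in>UNIV. W i j * (norm (u j - z))\<^sup>2)" by (rule sum_mono)
  also have "\<dots> = (\<Sum>j\<in>UNIV. (norm (u j - z))\<^sup>2)"
    by (subst sum.swap) (simp add: sum_distrib_right[symmetric] W_cols)
  finally show ?thesis .
qed

lemma spread_perturbed_step_le:
  fixes X :: "nat \<Rightarrow> 'n \<Rightarrow> 'a::real_normed_vector"
  assumes rec: "\<And>t. X (Suc t) = (\<lambda>i. mat_apply W (X t) i + e t i)"
    and e_le: "\<And>t. spread (e t) \<le> b t"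
  shows "spread (X (Suc t)) \<le> spread (X t) + b t"
  using spread_add_le[of "mat_apply W (X t)" "e t"] spread_mat_apply_W_le[of "X t"] e_le[of t]
  unfolding rec by linarith

lemma spread_perturbed_period_le:
  fixes X :: "nat \<Rightarrow> 'n \<Rightarrow> 'a::real_normed_vector"
  assumes rec: "\<And>t. X (Suc t) = (\<lambda>i. mat_apply W (X t) i + e t i)"
    and e_le: "\<And>t. spread (e t) \<le> b t"
  shows "spread (X (t + period)) \<le> (1 - contraction) * spread (X t) + (\<Sum>s<period. b (t + s))"
proof -
  define Z where "Z r = mat_apply (mat_pow W r) (X t)" for r
  have drift: "spread (\<lambda>i. X (t + r) i - Z r i) \<le> (\<Sum>s<r. b (t + s))" for r
  proof (induction r)
    case 0
    then show ?case by (simp add: Z_def spread_const)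
  next
    case (Suc r)
    define D where "D = (\<lambda>i. X (t + r) i - Z r i)"
    have "(\<lambda>i. X (t + Suc r) i - Z (Suc r) i) = (\<lambda>i. mat_apply W D i + e (t + r) i)"
      unfolding Z_def D_def by (auto simp: rec mat_apply_mat_mult mat_apply_diff)
    then have "spread (\<lambda>i. X (t + Suc r) i - Z (Suc r) i) \<le> spread D + b (t + r)"
      using spread_add_le[of "mat_apply W D" "e (t + r)"] spread_mat_apply_W_le[of D] e_le[of "t + r"]
      by simp
    then show ?case using Suc unfolding D_def by simp
  qed
  have "spread (X (t + period)) \<le> spread (Z period) + spread (\<lambda>i. X (t + period) i - Z period i)"
    using spread_add_le[of "Z period" "\<lambda>i. X (t + period) i - Z period i"] by simp
  then show ?thesis
    using spread_mat_apply_period_le[of "X t"] drift[of period] unfolding Z_def by linarith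
qed

lemma spread_perturbed_le:
  fixes X :: "nat \<Rightarrow> 'n \<Rightarrow> 'a::real_normed_vector"
  assumes rec: "\<And>t. X (Suc t) = (\<lambda>i. mat_apply W (X t) i + e t i)"
    and e_le: "\<And>t. spread (e t) \<le> b t" and X0: "spread (X 0) = 0"
  shows "spread (X t) \<le> (\<Sum>s<t. (1 - contraction) ^ ((t - 1 - s) div period) * b s)"
proof (induction t rule: less_induct)
  case (less t)
  show ?case
  proof (cases "t < period")
    case True
    have "spread (X t') \<le> (\<Sum>s<t'. b s)" for t'
    proof (induction t')
      case (Suc t')
      then show ?case using spread_perturbed_step_le[of X e b t', OF rec e_le] by simp
    qed (simp add: X0)
    also have "(\<Sum>s<t. b s) = (\<Sum>s<t. (1 - contraction) ^ ((t - 1 - s) div period) * b s)"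
      using True by (intro sum.cong) auto
    finally show ?thesis .
  next
    case False
    then obtain t' where t: "t = t' + period" by (metis add.commute le_add_diff_inverse not_less)
    have "spread (X t) \<le> (1 - contraction) * spread (X t') + (\<Sum>s<period. b (t' + s))"
      unfolding t by (rule spread_perturbed_period_le[of X e b, OF rec e_le])
    also have "\<dots> \<le> (1 - contraction) * (\<Sum>s<t'. (1 - contraction) ^ ((t' - 1 - s) div period) * b s)
        + (\<Sum>s<period. b (t' + s))"
      using less[of t'] t period_pos contraction_lt_1 by (simp add: mult_left_mono)
    also have "\<dots> = (\<Sum>s<t. (1 - contraction) ^ ((t - 1 - s) div period) * b s)"
      unfolding t by (rule sum_decay_period_split[OF period_pos, symmetric])
    finally show ?thesis .
  qed
qed

lemma weighted_spread_sum_le: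
  fixes X :: "nat \<Rightarrow> 'n \<Rightarrow> 'a::real_normed_vector"
  assumes rec: "\<And>t. X (Suc t) = (\<lambda>i. mat_apply W (X t) i + e t i)"
    and e_le: "\<And>t. spread (e t) \<le> b t" and b_nonneg: "\<And>t. b t \<ge> 0"
    and X0: "spread (X 0) = 0"
    and a_nonneg: "\<And>t. a t \<ge> 0" and a_antimono: "\<And>s t. s \<le> t \<Longrightarrow> a t \<le> a s"
  shows "(\<Sum>t<T. a t * spread (X t)) \<le> (real period / contraction) * (\<Sum>s<T. a s * b s)"
proof -
  let ?c = "1 - contraction"
  have c: "0 \<le> ?c" "?c < 1" using contraction_lt_1 contraction_pos by auto
  have "(\<Sum>t<T. a t * spread (X t)) \<le> (\<Sum>t<T. a t * (\<Sum>s<t. ?c ^ ((t - 1 - s) div period) * b s))"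
    by (intro sum_mono mult_left_mono spread_perturbed_le[OF rec e_le X0] a_nonneg)
  also have "\<dots> \<le> (\<Sum>t<T. \<Sum>s<T. if s < t then a s * (?c ^ ((t - 1 - s) div period) * b s) else 0)"
  proof (rule sum_mono)
    fix t assume t: "t \<in> {..<T}"
    have "a t * (\<Sum>s<t. ?c ^ ((t - 1 - s) div period) * b s)
        \<le> (\<Sum>s<t. a s * (?c ^ ((t - 1 - s) div period) * b s))"
      unfolding sum_distrib_left
      by (intro sum_mono mult_right_mono) (use a_antimono b_nonneg c in auto)
    also have "\<dots> = (\<Sum>s\<in>{s\<in>{..<T}. s < t}. a s * (?c ^ ((t - 1 - s) div period) * b s))"
      using t by (intro sum.cong) auto
    also have "\<dots> = (\<Sum>s<T. if s < t then a s * (?c ^ ((t - 1 - s) div period) * b s) else 0)"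
      by (rule sum.inter_filter) simp
    finally show "a t * (\<Sum>s<t. ?c ^ ((t - 1 - s) div period) * b s) \<le> \<dots>" .
  qed
  also have "\<dots> = (\<Sum>s<T. a s * b s * (\<Sum>t<T. if s < t then ?c ^ ((t - 1 - s) div period) else 0))"
    by (subst sum.swap) (auto simp: sum_distrib_left intro!: sum.cong)
  also have "\<dots> \<le> (\<Sum>s<T. a s * b s * (real period / contraction))"
  proof (intro sum_mono mult_left_mono)
    fix s
    have "(\<Sum>t<T. if s < t then ?c ^ ((t - 1 - s) div period) else 0) \<le> (\<Sum>j<T. ?c ^ (j div period))"
      by (rule sum_shifted_le) (use c in simp)
    also have "\<dots> \<le> real period / (1 - ?c)" by (rule sum_power_div_le) (use c period_pos in auto)
    finally show "(\<Sum>t<T. if s < t then ?c ^ ((t - 1 - s) div period) else 0) \<le> real period / contraction"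
      by simp
    show "0 \<le> a s * b s" using a_nonneg b_nonneg by simp
  qed
  also have "\<dots> = (real period / contraction) * (\<Sum>s<T. a s * b s)"
    by (simp add: sum_distrib_left mult.commute)
  finally show ?thesis .
qed

end

section \<open>The primal-dual iteration\<close>

locale problem = mixing_graph W E for W :: "'n::finite \<Rightarrow> 'n \<Rightarrow> real" and E +
  fixes df :: "'n \<Rightarrow> real^'d::finite \<Rightarrow> real^'d" and f :: "'n \<Rightarrow> real^'d \<Rightarrow> real"
    and g :: "'m::finite \<Rightarrow> real^'d \<Rightarrow> real" and dg :: "'m \<Rightarrow> real^'d \<Rightarrow> real^'d"
    and R L :: real
  assumes df_subgrad: "\<And>i x y. x \<in> cball 0 R \<Longrightarrow> y \<in> cball 0 R \<Longrightarrow> f i y \<ge> f i x + df i x \<bullet> (y - x)"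
    and dg_subgrad: "\<And>k x y. x \<in> cball 0 R \<Longrightarrow> y \<in> cball 0 R \<Longrightarrow> g k y \<ge> g k x + dg k x \<bullet> (y - x)"
    and df_bound: "\<And>i x. x \<in> cball 0 R \<Longrightarrow> norm (df i x) \<le> L"
    and dg_bound: "\<And>k x. x \<in> cball 0 R \<Longrightarrow> norm (dg k x) \<le> L"
    and R_nonneg: "R \<ge> 0"
begin

lemma zero_in_ball: "(0::real^'d) \<in> cball 0 R"
  using R_nonneg by simp

lemma L_nonneg: "L \<ge> 0"
  using df_bound[OF zero_in_ball] norm_ge_zero order_trans by blast

lemma norm_diff_le_diameter: "x \<in> cball 0 R \<Longrightarrow> y \<in> cball 0 R \<Longrightarrow> norm (x - y) \<le> 2 * R"
  using norm_triangle_ineq4[of x y] by simp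

lemma f_ge_lipschitz:
  assumes "x \<in> cball 0 R" "y \<in> cball 0 R"
  shows "f i y \<ge> f i x - L * norm (y - x)"
proof -
  have "\<bar>df i x \<bullet> (y - x)\<bar> \<le> L * norm (y - x)"
    using Cauchy_Schwarz_ineq2[of "df i x" "y - x"] df_bound[OF assms(1)]
    by (meson mult_right_mono norm_ge_zero order_trans)
  then show ?thesis using df_subgrad[OF assms, of i] by linarith
qed

lemma g_ge_lipschitz:
  assumes "x \<in> cball 0 R" "y \<in> cball 0 R"
  shows "g k y \<ge> g k x - L * norm (y - x)"
proof -
  have "\<bar>dg k x \<bullet> (y - x)\<bar> \<le> L * norm (y - x)"
    using Cauchy_Schwarz_ineq2[of "dg k x" "y - x"] dg_bound[OF assms(1)]
    by (meson mult_right_mono norm_ge_zero order_trans)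
  then show ?thesis using dg_subgrad[OF assms, of k] by linarith
qed

definition g_max :: real where
  "g_max = (\<Sum>k\<in>UNIV. \<bar>g k 0\<bar>) + L * R"

lemma abs_g_le_g_max: "x \<in> cball 0 R \<Longrightarrow> \<bar>g k x\<bar> \<le> g_max"
proof -
  assume x: "x \<in> cball 0 R"
  have "L * norm x \<le> L * R" using x L_nonneg by (simp add: mult_left_mono)
  moreover have "\<bar>g k 0\<bar> \<le> (\<Sum>k\<in>UNIV. \<bar>g k 0\<bar>)" by (rule member_le_sum) auto
  ultimately show ?thesis
    using g_ge_lipschitz[OF zero_in_ball x, of k] g_ge_lipschitz[OF x zero_in_ball, of k]
    unfolding g_max_def by (simp add: abs_le_iff)
qed

lemma g_max_nonneg: "g_max \<ge> 0"
  using abs_g_le_g_max[OF zero_in_ball] by (meson abs_ge_zero order_trans)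

definition grad_const :: real where
  "grad_const = 2 * L\<^sup>2 + 2 * (real CARD('m))\<^sup>2 * g_max\<^sup>2"

lemma grad_const_nonneg: "grad_const \<ge> 0"
  unfolding grad_const_def by simp

end

locale run = problem W E df f g dg R L
  for W :: "'n::finite \<Rightarrow> 'n \<Rightarrow> real" and E
    and df :: "'n \<Rightarrow> real^'d::finite \<Rightarrow> real^'d" and f :: "'n \<Rightarrow> real^'d \<Rightarrow> real"
    and g :: "'m::finite \<Rightarrow> real^'d \<Rightarrow> real" and dg :: "'m \<Rightarrow> real^'d \<Rightarrow> real^'d"
    and R L :: real +
  fixes \<eta> :: real
  assumes eta_pos: "\<eta> > 0" and eta_stepsize: "\<And>t. \<eta> * stepsize R t \<le> 1 / 2"
begin

abbreviation a where "a \<equiv> stepsize R"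

definition X :: "nat \<Rightarrow> 'n \<Rightarrow> real^'d" where
  "X t = fst (alg_state df dg g W R \<eta> a t)"

definition Lam :: "nat \<Rightarrow> 'n \<Rightarrow> real^'m" where
  "Lam t = snd (alg_state df dg g W R \<eta> a t)"

definition grad_x :: "nat \<Rightarrow> 'n \<Rightarrow> real^'d" where
  "grad_x t i = df i (X t i) + (\<Sum>k\<in>UNIV. (Lam t i $ k) *\<^sub>R dg k (X t i))"

definition grad_lam :: "nat \<Rightarrow> 'n \<Rightarrow> real^'m" where
  "grad_lam t i = gvec g (X t i) - \<eta> *\<^sub>R Lam t i"

lemma X_0: "X 0 = (\<lambda>i. 0)" and Lam_0: "Lam 0 = (\<lambda>i. 0)"
  by (simp_all add: X_def Lam_def)

lemma X_Suc:
  "X (Suc t) = (\<lambda>i. closest_point (cball 0 R) (\<Sum>j\<in>UNIV. W i j *\<^sub>R (X t j - a t *\<^sub>R grad_x t j)))"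
  by (simp add: X_def Lam_def grad_x_def Let_def)

lemma Lam_Suc: "Lam (Suc t) = (\<lambda>i. pos_part (\<Sum>j\<in>UNIV. W i j *\<^sub>R (Lam t j + a t *\<^sub>R grad_lam t j)))"
  by (simp add: X_def Lam_def grad_lam_def Let_def closest_point_nonneg_orthant)

lemma a_nonneg: "a t \<ge> 0"
  unfolding stepsize_def using R_nonneg by simp

lemma a_antimono: "s \<le> t \<Longrightarrow> a t \<le> a s"
  unfolding stepsize_def using R_nonneg by (intro divide_left_mono) auto

lemma a_le_R: "a t \<le> R"
  using a_antimono[of 0 t] by (simp add: stepsize_def)

lemma X_in_ball: "X t i \<in> cball 0 R"
proof (cases t)
  case (Suc s)
  have "closest_point (cball 0 R) (\<Sum>j\<in>UNIV. W i j *\<^sub>R (X s j - a s *\<^sub>R grad_x s j)) \<in> cball 0 R"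
    using zero_in_ball by (intro closest_point_in_set) auto
  then show ?thesis unfolding Suc X_Suc by simp
qed (simp add: X_0 R_nonneg)

lemma Lam_nonneg: "0 \<le> Lam t i $ k"
  by (cases t) (simp_all add: Lam_0 Lam_Suc pos_part_def)

definition lam_max :: real where
  "lam_max = g_max / \<eta>"

lemma lam_max_nonneg: "lam_max \<ge> 0"
  unfolding lam_max_def using g_max_nonneg eta_pos by simp

text \<open>Since \<open>\<eta> a t \<le> 1/2\<close>, each coordinate of the dual update is the convex-type
  combination \<open>(1 - \<eta> a t) \<lambda> + a t g\<close>, which cannot leave \<open>[0, g_max / \<eta>]\<close>.\<close>

lemma Lam_le_lam_max: "Lam t i $ k \<le> lam_max"
proof (induction t arbitrary: i)
  case (Suc t)
  have step: "(Lam t j + a t *\<^sub>R grad_lam t j) $ k \<le> lam_max" for j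
  proof -
    have "(Lam t j + a t *\<^sub>R grad_lam t j) $ k = (1 - \<eta> * a t) * Lam t j $ k + a t * g k (X t j)"
      by (simp add: grad_lam_def gvec_def algebra_simps)
    also have "\<dots> \<le> (1 - \<eta> * a t) * lam_max + a t * g_max"
      using eta_stepsize[of t] Suc.IH abs_g_le_g_max[OF X_in_ball, of k t j] a_nonneg[of t]
      by (intro add_mono mult_left_mono) auto
    also have "\<dots> = lam_max" unfolding lam_max_def using eta_pos by (simp add: field_simps)
    finally show ?thesis .
  qed
  have "(\<Sum>j\<in>UNIV. W i j *\<^sub>R (Lam t j + a t *\<^sub>R grad_lam t j)) $ k \<le> (\<Sum>j\<in>UNIV. W i j * lam_max)"
    unfolding sum_component vector_scaleR_component real_scaleR_def
    by (intro sum_mono mult_left_mono step W_nonneg)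
  also have "\<dots> = lam_max" by (simp add: sum_distrib_right[symmetric] W_rows)
  finally show ?case using lam_max_nonneg by (simp add: Lam_Suc pos_part_def)
qed (simp add: Lam_0 lam_max_nonneg)

definition lam_sum :: "nat \<Rightarrow> 'n \<Rightarrow> real" where
  "lam_sum t i = (\<Sum>k\<in>UNIV. Lam t i $ k)"

lemma lam_sum_nonneg: "lam_sum t i \<ge> 0"
  unfolding lam_sum_def by (intro sum_nonneg) (simp add: Lam_nonneg)

lemma lam_sum_le: "lam_sum t i \<le> real CARD('m) * lam_max"
  using sum_mono[of UNIV "\<lambda>k. Lam t i $ k" "\<lambda>k. lam_max"] Lam_le_lam_max
  unfolding lam_sum_def by simp

lemma norm_Lam_le: "norm (Lam t i) \<le> lam_sum t i"
  using norm_le_l1_cart[of "Lam t i"] Lam_nonneg unfolding lam_sum_def by simp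

lemma norm_grad_x_le: "norm (grad_x t i) \<le> L * (1 + lam_sum t i)"
proof -
  have "norm (\<Sum>k\<in>UNIV. (Lam t i $ k) *\<^sub>R dg k (X t i)) \<le> (\<Sum>k\<in>UNIV. Lam t i $ k * L)"
    by (rule order_trans[OF norm_sum], rule sum_mono)
      (simp add: Lam_nonneg dg_bound[OF X_in_ball] mult_left_mono)
  also have "\<dots> = L * lam_sum t i"
    unfolding lam_sum_def by (simp add: sum_distrib_left mult.commute)
  finally show ?thesis
    using df_bound[OF X_in_ball, of i t i]
      norm_triangle_ineq[of "df i (X t i)" "\<Sum>k\<in>UNIV. (Lam t i $ k) *\<^sub>R dg k (X t i)"]
    unfolding grad_x_def by (simp add: distrib_left)
qed

lemma norm_grad_lam_le: "norm (grad_lam t i) \<le> real CARD('m) * g_max + \<eta> * lam_sum t i"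
proof -
  have "norm (gvec g (X t i)) \<le> (\<Sum>k\<in>UNIV. \<bar>gvec g (X t i) $ k\<bar>)" by (rule norm_le_l1_cart)
  also have "\<dots> \<le> (\<Sum>k\<in>(UNIV::'m set). g_max)"
    by (rule sum_mono) (simp add: gvec_def abs_g_le_g_max[OF X_in_ball])
  finally have "norm (gvec g (X t i)) \<le> real CARD('m) * g_max" by simp
  moreover have "norm (\<eta> *\<^sub>R Lam t i) \<le> \<eta> * lam_sum t i"
    using norm_Lam_le[of t i] eta_pos by (simp add: mult_left_mono)
  ultimately show ?thesis
    unfolding grad_lam_def using norm_triangle_ineq4[of "gvec g (X t i)" "\<eta> *\<^sub>R Lam t i"] by linarith
qed

definition grad_lam_coeff :: real where
  "grad_lam_coeff = 2 * L\<^sup>2 * real CARD('m) * lam_max + 2 * \<eta> * real CARD('m) * g_max"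

lemma grad_lam_coeff_nonneg: "grad_lam_coeff \<ge> 0"
  unfolding grad_lam_coeff_def using lam_max_nonneg eta_pos g_max_nonneg by simp

text \<open>The squared gradients grow only linearly in the duals, because
  \<open>lam_sum\<^sup>2 \<le> CARD('m) lam_max lam_sum\<close>.\<close>

lemma sq_norm_grads_le:
  "(norm (grad_x t i))\<^sup>2 + (norm (grad_lam t i))\<^sup>2 \<le> grad_const + grad_lam_coeff * lam_sum t i"
proof -
  let ?s = "lam_sum t i" and ?M = "real CARD('m)"
  have sq: "?s\<^sup>2 \<le> ?M * lam_max * ?s"
    using lam_sum_nonneg lam_sum_le by (simp add: power2_eq_square mult_right_mono)
  have "(norm (grad_x t i))\<^sup>2 \<le> (L * (1 + ?s))\<^sup>2"
    using norm_grad_x_le by (rule power_mono) simp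
  also have "\<dots> = L\<^sup>2 * (1 + ?s)\<^sup>2" by (simp add: power_mult_distrib)
  also have "\<dots> \<le> L\<^sup>2 * (2 + 2 * ?s\<^sup>2)"
    using sum_squares_bound[of 1 ?s] by (intro mult_left_mono) (simp_all add: power2_eq_square algebra_simps)
  also have "\<dots> = 2 * L\<^sup>2 + 2 * L\<^sup>2 * ?s\<^sup>2" by (simp add: algebra_simps)
  also have "\<dots> \<le> 2 * L\<^sup>2 + 2 * L\<^sup>2 * (?M * lam_max * ?s)"
    using sq by (simp add: mult_left_mono)
  finally have x: "(norm (grad_x t i))\<^sup>2 \<le> 2 * L\<^sup>2 + 2 * L\<^sup>2 * (?M * lam_max * ?s)" .
  have "(norm (grad_lam t i))\<^sup>2 \<le> (?M * g_max + \<eta> * ?s)\<^sup>2"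
    using norm_grad_lam_le by (rule power_mono) simp
  also have "\<dots> \<le> 2 * (?M * g_max)\<^sup>2 + 2 * \<eta>\<^sup>2 * ?s\<^sup>2"
    using sum_squares_bound[of "?M * g_max" "\<eta> * ?s"] by (simp add: power2_sum power_mult_distrib)
  finally have y: "(norm (grad_lam t i))\<^sup>2 \<le> 2 * (?M * g_max)\<^sup>2 + 2 * \<eta>\<^sup>2 * ?s\<^sup>2" .
  have "\<eta>\<^sup>2 * ?s\<^sup>2 \<le> \<eta>\<^sup>2 * (?M * lam_max * ?s)"
    using sq by (simp add: mult_left_mono)
  also have "\<dots> = \<eta> * ?M * g_max * ?s"
    unfolding lam_max_def using eta_pos by (simp add: power2_eq_square field_simps)
  finally have "(norm (grad_lam t i))\<^sup>2 \<le> 2 * (?M * g_max)\<^sup>2 + 2 * (\<eta> * ?M * g_max * ?s)"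
    using y by linarith
  with x show ?thesis
    unfolding grad_const_def grad_lam_coeff_def by (simp add: power_mult_distrib algebra_simps)
qed

section \<open>Descent and the constraint violation\<close>

definition lagrangian :: "'n \<Rightarrow> real^'d \<Rightarrow> real^'m \<Rightarrow> real" where
  "lagrangian i x l = f i x + l \<bullet> gvec g x - \<eta> / 2 * (norm l)\<^sup>2"

definition lyap :: "real^'d \<Rightarrow> real^'m \<Rightarrow> nat \<Rightarrow> real" where
  "lyap x \<mu> t = (\<Sum>i\<in>UNIV. (norm (X t i - x))\<^sup>2) + (\<Sum>i\<in>UNIV. (norm (Lam t i - \<mu>))\<^sup>2)"

lemma sum_sq_dist_X_Suc_le:
  assumes x: "x \<in> cball 0 R"
  shows "(\<Sum>i\<in>UNIV. (norm (X (Suc t) i - x))\<^sup>2)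
      \<le> (\<Sum>i\<in>UNIV. (norm ((X t i - a t *\<^sub>R grad_x t i) - x))\<^sup>2)"
proof -
  have "(\<Sum>i\<in>UNIV. (norm (X (Suc t) i - x))\<^sup>2)
      \<le> (\<Sum>i\<in>UNIV. (norm ((\<Sum>j\<in>UNIV. W i j *\<^sub>R (X t j - a t *\<^sub>R grad_x t j)) - x))\<^sup>2)"
    unfolding X_Suc by (intro sum_mono power_mono norm_closest_point_minus_le x) auto
  also have "\<dots> \<le> (\<Sum>i\<in>UNIV. (norm ((X t i - a t *\<^sub>R grad_x t i) - x))\<^sup>2)"
    by (rule sum_sq_dist_mat_apply_le)
  finally show ?thesis .
qed

lemma sum_sq_dist_Lam_Suc_le:
  assumes \<mu>: "\<mu> \<in> nonneg_orthant"
  shows "(\<Sum>i\<in>UNIV. (norm (Lam (Suc t) i - \<mu>))\<^sup>2)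
      \<le> (\<Sum>i\<in>UNIV. (norm ((Lam t i + a t *\<^sub>R grad_lam t i) - \<mu>))\<^sup>2)"
proof -
  have "(\<Sum>i\<in>UNIV. (norm (Lam (Suc t) i - \<mu>))\<^sup>2)
      \<le> (\<Sum>i\<in>UNIV. (norm ((\<Sum>j\<in>UNIV. W i j *\<^sub>R (Lam t j + a t *\<^sub>R grad_lam t j)) - \<mu>))\<^sup>2)"
    unfolding Lam_Suc closest_point_nonneg_orthant[symmetric]
    by (intro sum_mono power_mono norm_closest_point_minus_le \<mu> nonneg_orthant_convex
        nonneg_orthant_closed) auto
  also have "\<dots> \<le> (\<Sum>i\<in>UNIV. (norm ((Lam t i + a t *\<^sub>R grad_lam t i) - \<mu>))\<^sup>2)"
    by (rule sum_sq_dist_mat_apply_le)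
  finally show ?thesis .
qed

lemma inner_grad_x_ge:
  assumes x: "x \<in> cball 0 R"
  shows "grad_x t i \<bullet> (X t i - x)
      \<ge> f i (X t i) - f i x + Lam t i \<bullet> gvec g (X t i) - Lam t i \<bullet> gvec g x"
proof -
  have "(\<Sum>k\<in>UNIV. Lam t i $ k * (g k (X t i) - g k x))
      \<le> (\<Sum>k\<in>UNIV. Lam t i $ k * (dg k (X t i) \<bullet> (X t i - x)))"
  proof (intro sum_mono mult_left_mono)
    fix k
    show "g k (X t i) - g k x \<le> dg k (X t i) \<bullet> (X t i - x)"
      using dg_subgrad[of "X t i" x k, OF X_in_ball x] by (simp add: inner_diff_right)
  qed (simp add: Lam_nonneg)
  moreover have "(\<Sum>k\<in>UNIV. Lam t i $ k * (g k (X t i) - g k x))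
      = Lam t i \<bullet> gvec g (X t i) - Lam t i \<bullet> gvec g x"
    by (simp add: inner_gvec sum_subtractf algebra_simps)
  moreover have "f i (X t i) - f i x \<le> df i (X t i) \<bullet> (X t i - x)"
    using df_subgrad[of "X t i" x i, OF X_in_ball x] by (simp add: inner_diff_right)
  ultimately show ?thesis
    unfolding grad_x_def inner_add_left inner_sum_left by simp
qed

lemma inner_grad_lam_le:
  "grad_lam t i \<bullet> (Lam t i - \<mu>) \<le> lagrangian i (X t i) (Lam t i) - lagrangian i (X t i) \<mu>"
proof -
  let ?l = "Lam t i"
  have "?l \<bullet> \<mu> \<le> ((norm ?l)\<^sup>2 + (norm \<mu>)\<^sup>2) / 2"
    using power2_norm_diff_scaleR[of ?l 1 \<mu>] zero_le_power2[of "norm (?l - \<mu>)"]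
    by (simp add: inner_commute)
  then have "\<eta> * (?l \<bullet> \<mu>) \<le> \<eta> * (((norm ?l)\<^sup>2 + (norm \<mu>)\<^sup>2) / 2)"
    using eta_pos by (simp add: mult_left_mono)
  then show ?thesis
    unfolding grad_lam_def lagrangian_def
    by (simp add: inner_diff_left inner_diff_right inner_commute power2_norm_eq_inner algebra_simps)
qed

lemma lyap_Suc_le:
  assumes x: "x \<in> cball 0 R" and \<mu>: "\<mu> \<in> nonneg_orthant"
  shows "lyap x \<mu> (Suc t) \<le> lyap x \<mu> t
      - 2 * a t * (\<Sum>i\<in>UNIV. lagrangian i (X t i) \<mu> - lagrangian i x (Lam t i))
      + (a t)\<^sup>2 * (\<Sum>i\<in>UNIV. (norm (grad_x t i))\<^sup>2 + (norm (grad_lam t i))\<^sup>2)"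
proof -
  have primal: "(norm ((X t i - a t *\<^sub>R grad_x t i) - x))\<^sup>2 \<le> (norm (X t i - x))\<^sup>2
      - 2 * a t * (lagrangian i (X t i) (Lam t i) - lagrangian i x (Lam t i))
      + (a t)\<^sup>2 * (norm (grad_x t i))\<^sup>2" for i
    using power2_norm_diff_scaleR[of "X t i - x" "a t" "grad_x t i"]
      mult_left_mono[OF inner_grad_x_ge[OF x, where t=t and i=i] a_nonneg[of t]]
    by (simp add: lagrangian_def algebra_simps)
  have dual: "(norm ((Lam t i + a t *\<^sub>R grad_lam t i) - \<mu>))\<^sup>2 \<le> (norm (Lam t i - \<mu>))\<^sup>2
      + 2 * a t * (lagrangian i (X t i) (Lam t i) - lagrangian i (X t i) \<mu>)
      + (a t)\<^sup>2 * (norm (grad_lam t i))\<^sup>2" for i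
    using power2_norm_add_scaleR[of "Lam t i - \<mu>" "a t" "grad_lam t i"]
      mult_left_mono[OF inner_grad_lam_le[where t=t and i=i and \<mu>=\<mu>] a_nonneg[of t]]
    by (simp add: algebra_simps)
  have "lyap x \<mu> (Suc t) \<le> (\<Sum>i\<in>UNIV. (norm ((X t i - a t *\<^sub>R grad_x t i) - x))\<^sup>2)
      + (\<Sum>i\<in>UNIV. (norm ((Lam t i + a t *\<^sub>R grad_lam t i) - \<mu>))\<^sup>2)"
    unfolding lyap_def using sum_sq_dist_X_Suc_le[OF x] sum_sq_dist_Lam_Suc_le[OF \<mu>] by (rule add_mono)
  also have "\<dots> \<le> (\<Sum>i\<in>UNIV. (norm (X t i - x))\<^sup>2
        - 2 * a t * (lagrangian i (X t i) (Lam t i) - lagrangian i x (Lam t i))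
        + (a t)\<^sup>2 * (norm (grad_x t i))\<^sup>2)
      + (\<Sum>i\<in>UNIV. (norm (Lam t i - \<mu>))\<^sup>2
        + 2 * a t * (lagrangian i (X t i) (Lam t i) - lagrangian i (X t i) \<mu>)
        + (a t)\<^sup>2 * (norm (grad_lam t i))\<^sup>2)"
    by (intro add_mono sum_mono primal dual)
  also have "\<dots> = lyap x \<mu> t
      - 2 * a t * (\<Sum>i\<in>UNIV. lagrangian i (X t i) \<mu> - lagrangian i x (Lam t i))
      + (a t)\<^sup>2 * (\<Sum>i\<in>UNIV. (norm (grad_x t i))\<^sup>2 + (norm (grad_lam t i))\<^sup>2)"
    unfolding lyap_def by (simp add: sum.distrib sum_subtractf sum_distrib_left algebra_simps)
  finally show ?thesis .
qed

lemma weighted_gap_sum_le: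
  assumes x: "x \<in> cball 0 R" and \<mu>: "\<mu> \<in> nonneg_orthant"
  shows "2 * (\<Sum>t<T. a t * (\<Sum>i\<in>UNIV. lagrangian i (X t i) \<mu> - lagrangian i x (Lam t i)))
      \<le> real CARD('n) * (R\<^sup>2 + (norm \<mu>)\<^sup>2)
        + (\<Sum>t<T. (a t)\<^sup>2 * (\<Sum>i\<in>UNIV. grad_const + grad_lam_coeff * lam_sum t i))"
proof -
  have telescoped: "lyap x \<mu> T \<le> lyap x \<mu> 0
      - 2 * (\<Sum>t<T. a t * (\<Sum>i\<in>UNIV. lagrangian i (X t i) \<mu> - lagrangian i x (Lam t i)))
      + (\<Sum>t<T. (a t)\<^sup>2 * (\<Sum>i\<in>UNIV. (norm (grad_x t i))\<^sup>2 + (norm (grad_lam t i))\<^sup>2))"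
  proof (induction T)
    case (Suc T)
    then show ?case using lyap_Suc_le[OF x \<mu>, of T] by (simp add: algebra_simps)
  qed simp
  have "(norm x)\<^sup>2 \<le> R\<^sup>2" using x by (simp add: power_mono)
  then have "lyap x \<mu> 0 \<le> real CARD('n) * (R\<^sup>2 + (norm \<mu>)\<^sup>2)"
    unfolding lyap_def X_0 Lam_0 by (simp add: algebra_simps)
  moreover have "lyap x \<mu> T \<ge> 0" unfolding lyap_def by (simp add: sum_nonneg)
  moreover have "(\<Sum>t<T. (a t)\<^sup>2 * (\<Sum>i\<in>UNIV. (norm (grad_x t i))\<^sup>2 + (norm (grad_lam t i))\<^sup>2))
      \<le> (\<Sum>t<T. (a t)\<^sup>2 * (\<Sum>i\<in>UNIV. grad_const + grad_lam_coeff * lam_sum t i))"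
    by (intro sum_mono mult_left_mono sq_norm_grads_le) simp_all
  ultimately show ?thesis using telescoped by linarith
qed

definition step_sum :: "nat \<Rightarrow> real" where
  "step_sum T = (\<Sum>t<T. a t)"

abbreviation xh :: "'n \<Rightarrow> nat \<Rightarrow> real^'d" where
  "xh \<equiv> xhat df dg g W R \<eta> a"

definition mean_g :: "nat \<Rightarrow> real^'m" where
  "mean_g T = (1 / real CARD('n)) *\<^sub>R (\<Sum>i\<in>UNIV. gvec g (xh i T))"

lemma xh_eq: "xh i T = (1 / step_sum T) *\<^sub>R (\<Sum>t<T. a t *\<^sub>R X t i)"
  unfolding xhat_def step_sum_def X_def ..

lemma viol_eq: "viol df dg g W R \<eta> T = (norm (pos_part (mean_g T)))\<^sup>2"
  unfolding viol_def mean_g_def ..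

lemma step_sum_ge: "step_sum T \<ge> R * sqrt (real T)"
proof -
  have "R / sqrt (real T) \<le> a t" if "t < T" for t
    unfolding stepsize_def using that R_nonneg by (intro divide_left_mono) auto
  then have "(\<Sum>t<T. R / sqrt (real T)) \<le> step_sum T"
    unfolding step_sum_def by (intro sum_mono) auto
  moreover have "(\<Sum>t<T. R / sqrt (real T)) = R * sqrt (real T)"
    by (cases "T = 0") (simp_all add: field_simps real_sqrt_mult[symmetric])
  ultimately show ?thesis by simp
qed

lemma sum_sq_stepsize_le: "T \<ge> 1 \<Longrightarrow> (\<Sum>t<T. (a t)\<^sup>2) \<le> R\<^sup>2 * (1 + ln (real T))"
proof -
  assume T: "T \<ge> 1"
  have "(\<Sum>t<T. (a t)\<^sup>2) = R\<^sup>2 * harm T"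
    unfolding harm_altdef stepsize_def by (simp add: sum_distrib_left power_divide field_simps)
  also have "\<dots> \<le> R\<^sup>2 * (1 + ln (real T))"
    using euler_mascheroni_sequence_decreasing[of 1 T] T by (simp add: harm_def mult_left_mono)
  finally show ?thesis .
qed

lemma xh_in_ball: "step_sum T > 0 \<Longrightarrow> xh i T \<in> cball 0 R"
proof -
  assume S: "step_sum T > 0"
  have "norm (\<Sum>t<T. a t *\<^sub>R X t i) \<le> (\<Sum>t<T. a t * R)"
    by (rule order_trans[OF norm_sum], rule sum_mono)
      (use X_in_ball a_nonneg in \<open>auto intro: mult_left_mono\<close>)
  also have "\<dots> = step_sum T * R" unfolding step_sum_def by (simp add: sum_distrib_right)
  finally show ?thesis unfolding xh_eq using S by (simp add: divide_le_eq mult.commute)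
qed

lemma step_sum_mult_g_xh_le:
  assumes S: "step_sum T > 0"
  shows "step_sum T * g k (xh i T) \<le> (\<Sum>t<T. a t * g k (X t i))"
proof -
  let ?z = "xh i T"
  have z: "?z \<in> cball 0 R" by (rule xh_in_ball[OF S])
  have "(\<Sum>t<T. a t * (g k ?z + dg k ?z \<bullet> (X t i - ?z))) \<le> (\<Sum>t<T. a t * g k (X t i))"
    by (intro sum_mono mult_left_mono dg_subgrad[OF z X_in_ball] a_nonneg)
  moreover have "(\<Sum>t<T. a t * (g k ?z + dg k ?z \<bullet> (X t i - ?z)))
      = step_sum T * g k ?z + dg k ?z \<bullet> ((\<Sum>t<T. a t *\<^sub>R X t i) - step_sum T *\<^sub>R ?z)"
    unfolding step_sum_def
    by (simp add: algebra_simps sum.distrib sum_distrib_right inner_sum_right inner_diff_right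
        scaleR_sum_left sum_subtractf)
  moreover have "(\<Sum>t<T. a t *\<^sub>R X t i) - step_sum T *\<^sub>R ?z = 0"
    unfolding xh_eq using S by simp
  ultimately show ?thesis by simp
qed

lemma inner_mean_g_le:
  assumes \<mu>: "\<mu> \<in> nonneg_orthant" and S: "step_sum T > 0"
  shows "step_sum T * real CARD('n) * (\<mu> \<bullet> mean_g T) \<le> (\<Sum>t<T. a t * (\<Sum>i\<in>UNIV. \<mu> \<bullet> gvec g (X t i)))"
proof -
  have "step_sum T * real CARD('n) * (\<mu> \<bullet> mean_g T)
      = (\<Sum>i\<in>UNIV. \<Sum>k\<in>UNIV. \<mu> $ k * (step_sum T * g k (xh i T)))"
    unfolding mean_g_def by (simp add: inner_sum_right inner_gvec sum_distrib_left algebra_simps)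
  also have "\<dots> \<le> (\<Sum>i\<in>UNIV. \<Sum>k\<in>UNIV. \<mu> $ k * (\<Sum>t<T. a t * g k (X t i)))"
    using \<mu> unfolding nonneg_orthant_def
    by (intro sum_mono mult_left_mono step_sum_mult_g_xh_le[OF S]) auto
  also have "\<dots> = (\<Sum>i\<in>UNIV. \<Sum>t<T. \<Sum>k\<in>UNIV. a t * (\<mu> $ k * g k (X t i)))"
    by (simp add: sum_distrib_left algebra_simps sum.swap[of _ "{..<T}"])
  also have "\<dots> = (\<Sum>t<T. a t * (\<Sum>i\<in>UNIV. \<mu> \<bullet> gvec g (X t i)))"
    by (subst sum.swap) (simp add: inner_gvec sum_distrib_left)
  finally show ?thesis .
qed

definition obj_gap :: "real^'d \<Rightarrow> nat \<Rightarrow> real" where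
  "obj_gap x t = (\<Sum>i\<in>UNIV. f i (X t i) - f i x)"

definition dual_gap :: "real^'d \<Rightarrow> nat \<Rightarrow> real" where
  "dual_gap x t = (\<Sum>i\<in>UNIV. - (Lam t i \<bullet> gvec g x))"

lemma dual_gap_nonneg: "x \<in> feas_set g \<Longrightarrow> dual_gap x t \<ge> 0"
  unfolding dual_gap_def inner_gvec feas_set_def
  by (auto intro!: sum_nonneg sum_nonpos mult_nonneg_nonpos Lam_nonneg simp: sum_negf[symmetric])

lemma abs_obj_gap_le: "x \<in> cball 0 R \<Longrightarrow> \<bar>obj_gap x t\<bar> \<le> real CARD('n) * (2 * L * R)"
proof -
  assume x: "x \<in> cball 0 R"
  have "\<bar>f i (X t i) - f i x\<bar> \<le> 2 * L * R" for i
    using f_ge_lipschitz[OF x X_in_ball, of i t i] f_ge_lipschitz[OF X_in_ball x, of i t i]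
      mult_left_mono[OF norm_diff_le_diameter[OF X_in_ball x] L_nonneg, of t i]
      mult_left_mono[OF norm_diff_le_diameter[OF x X_in_ball] L_nonneg, of t i]
    by (simp add: abs_le_iff)
  then have "\<bar>obj_gap x t\<bar> \<le> (\<Sum>i\<in>(UNIV::'n set). 2 * L * R)"
    unfolding obj_gap_def by (intro order_trans[OF sum_abs] sum_mono)
  then show ?thesis by simp
qed

text \<open>The descent estimate tested against \<open>\<mu> = [mean_g T]\<^sub>+ / \<eta>\<close>: the dual terms
  produce the violation, with the quadratic regularization costing only \<open>P / \<eta>\<^sup>2\<close>.\<close>

lemma viol_master_ineq:
  assumes x: "x \<in> cball 0 R" and S: "step_sum T > 0"
  defines "P \<equiv> viol df dg g W R \<eta> T"
  shows "2 * (\<Sum>t<T. a t * obj_gap x t) + 2 * (\<Sum>t<T. a t * dual_gap x t)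
       + step_sum T * real CARD('n) * P / \<eta>
      \<le> real CARD('n) * R\<^sup>2 + real CARD('n) * P / \<eta>\<^sup>2
        + (\<Sum>t<T. (a t)\<^sup>2 * (\<Sum>i\<in>UNIV. grad_const + grad_lam_coeff * lam_sum t i))"
proof -
  let ?N = "real CARD('n)"
  define \<mu> where "\<mu> = (1 / \<eta>) *\<^sub>R pos_part (mean_g T)"
  have \<mu>: "\<mu> \<in> nonneg_orthant"
    unfolding \<mu>_def nonneg_orthant_def pos_part_def using eta_pos by simp
  have inner: "\<mu> \<bullet> mean_g T = P / \<eta>"
    unfolding \<mu>_def P_def viol_eq using inner_pos_part_self[of "mean_g T"] by simp
  have norm: "(norm \<mu>)\<^sup>2 = P / \<eta>\<^sup>2"
    unfolding \<mu>_def P_def viol_eq using eta_pos by (simp add: power_mult_distrib power_divide)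
  have gap: "(\<Sum>i\<in>UNIV. lagrangian i (X t i) \<mu> - lagrangian i x (Lam t i))
      = obj_gap x t + dual_gap x t + (\<Sum>i\<in>UNIV. \<mu> \<bullet> gvec g (X t i))
        + (\<Sum>i\<in>UNIV. \<eta> / 2 * (norm (Lam t i))\<^sup>2) - ?N * (\<eta> / 2 * (norm \<mu>)\<^sup>2)" for t
    unfolding lagrangian_def obj_gap_def dual_gap_def
    by (simp add: sum.distrib sum_subtractf sum_negf algebra_simps)
  have "(\<Sum>t<T. a t * (\<Sum>i\<in>UNIV. lagrangian i (X t i) \<mu> - lagrangian i x (Lam t i)))
      = (\<Sum>t<T. a t * obj_gap x t) + (\<Sum>t<T. a t * dual_gap x t)
        + (\<Sum>t<T. a t * (\<Sum>i\<in>UNIV. \<mu> \<bullet> gvec g (X t i)))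
        + (\<Sum>t<T. a t * (\<Sum>i\<in>UNIV. \<eta> / 2 * (norm (Lam t i))\<^sup>2)) - step_sum T * (?N * (\<eta> / 2 * (norm \<mu>)\<^sup>2))"
    unfolding gap step_sum_def
    by (simp add: algebra_simps sum.distrib sum_subtractf sum_distrib_right sum_distrib_left
        flip: sum_divide_distrib)
  moreover have "(\<Sum>t<T. a t * (\<Sum>i\<in>UNIV. \<eta> / 2 * (norm (Lam t i))\<^sup>2)) \<ge> 0"
    using eta_pos by (intro sum_nonneg mult_nonneg_nonneg a_nonneg) auto
  moreover have "2 * (step_sum T * ?N * (P / \<eta>)) - step_sum T * (?N * (\<eta> * P / \<eta>\<^sup>2))
      = step_sum T * ?N * P / \<eta>"
    using eta_pos by (simp add: power2_eq_square field_simps)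
  ultimately show ?thesis
    using inner_mean_g_le[OF \<mu> S] weighted_gap_sum_le[OF x \<mu>, of T] unfolding inner norm
    by (simp add: algebra_simps)
qed

lemma viol_nonneg: "viol df dg g W R \<eta> T \<ge> 0"
  unfolding viol_def by simp

lemma step_sum_pos: "R > 0 \<Longrightarrow> T \<ge> 1 \<Longrightarrow> step_sum T > 0"
proof -
  assume "R > 0" "T \<ge> 1"
  then have "R * sqrt (real T) > 0" by simp
  then show ?thesis using step_sum_ge[of T] by linarith
qed

text \<open>Once \<open>2 / \<eta> \<le> R \<surd>T \<le> step_sum T\<close>, the term \<open>P / \<eta>\<^sup>2\<close> of the master
  inequality is absorbed into half of its left-hand side.\<close>

lemma viol_absorbed:
  assumes x: "x \<in> cball 0 R" and R: "R > 0" and T: "T \<ge> 1" and large: "2 / \<eta> \<le> R * sqrt (real T)"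
  defines "P \<equiv> viol df dg g W R \<eta> T"
  shows "real CARD('n) * (step_sum T * P / (2 * \<eta>))
      \<le> real CARD('n) * R\<^sup>2 + (\<Sum>t<T. (a t)\<^sup>2 * (\<Sum>i\<in>UNIV. grad_const + grad_lam_coeff * lam_sum t i))
        - 2 * (\<Sum>t<T. a t * obj_gap x t) - 2 * (\<Sum>t<T. a t * dual_gap x t)"
proof -
  let ?N = "real CARD('n)"
  have S: "step_sum T > 0"
    using step_sum_pos[OF R T] .
  have "P / \<eta>\<^sup>2 = (2 / \<eta>) * P / (2 * \<eta>)" using eta_pos by (simp add: power2_eq_square field_simps)
  also have "\<dots> \<le> step_sum T * P / (2 * \<eta>)"
    using large step_sum_ge[of T] viol_nonneg eta_pos unfolding P_def
    by (intro divide_right_mono mult_right_mono) auto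
  finally have "?N * (P / \<eta>\<^sup>2) \<le> ?N * (step_sum T * P / (2 * \<eta>))"
    by (rule mult_left_mono) simp
  then have "?N * P / \<eta>\<^sup>2 \<le> ?N * (step_sum T * P / (2 * \<eta>))" by simp
  moreover have "step_sum T * ?N * P / \<eta> = 2 * (?N * (step_sum T * P / (2 * \<eta>)))"
    using eta_pos by (simp add: field_simps)
  ultimately show ?thesis using viol_master_ineq[OF x S] unfolding P_def by linarith
qed

definition grad_total :: real where
  "grad_total = grad_const + grad_lam_coeff * (real CARD('m) * lam_max)"

lemma grad_total_nonneg: "grad_total \<ge> 0"
  unfolding grad_total_def
  using grad_const_nonneg grad_lam_coeff_nonneg lam_max_nonneg by simp

lemma sum_sq_grads_le:
  "(\<Sum>t<T. (a t)\<^sup>2 * (\<Sum>i\<in>UNIV. grad_const + grad_lam_coeff * lam_sum t i))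
     \<le> real CARD('n) * (grad_total * (\<Sum>t<T. (a t)\<^sup>2))"
proof -
  have "(\<Sum>i\<in>(UNIV::'n set). grad_const + grad_lam_coeff * lam_sum t i) \<le> real CARD('n) * grad_total" for t
    using sum_mono[of UNIV "\<lambda>i. grad_const + grad_lam_coeff * lam_sum t i" "\<lambda>i. grad_total"]
      mult_left_mono[OF lam_sum_le grad_lam_coeff_nonneg]
    unfolding grad_total_def by simp
  then have "(\<Sum>t<T. (a t)\<^sup>2 * (\<Sum>i\<in>UNIV. grad_const + grad_lam_coeff * lam_sum t i))
      \<le> (\<Sum>t<T. (a t)\<^sup>2 * (real CARD('n) * grad_total))"
    by (intro sum_mono mult_left_mono) simp_all
  then show ?thesis by (simp add: sum_distrib_left sum_distrib_right mult_ac)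
qed

lemma viol_zero_radius:
  assumes R0: "R = 0" and x: "x \<in> feas_set g" "x \<in> cball 0 R"
  shows "viol df dg g W R \<eta> T = 0"
proof -
  have "X t i = 0" for t i using X_in_ball[of t i] R0 by simp
  then have xh0: "xh i T = 0" for i unfolding xh_eq by simp
  have "g k 0 \<le> 0" for k using x R0 unfolding feas_set_def by simp
  moreover have "mean_g T $ k = (1 / real CARD('n)) * (\<Sum>i\<in>(UNIV::'n set). g k 0)" for k
    unfolding mean_g_def xh0
    by (simp only: vector_scaleR_component sum_component gvec_def vec_lambda_beta real_scaleR_def)
  ultimately have "mean_g T $ k \<le> 0" for k by (simp add: mult_nonneg_nonpos sum_nonpos)
  then have "pos_part (mean_g T) = 0"
    unfolding pos_part_def by (simp add: vec_eq_iff max_def) (meson antisym)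
  then show ?thesis unfolding viol_eq by simp
qed

lemma weighted_obj_gap_lower_bound:
  assumes x: "x \<in> cball 0 R"
  shows "(\<Sum>t<T. a t * obj_gap x t) \<ge> - (2 * (real CARD('n) * L * R * step_sum T))"
proof -
  let ?c = "real CARD('n) * (2 * L * R)"
  have "- ?c \<le> obj_gap x t" for t
    using abs_obj_gap_le[OF x, of t] by linarith
  then have "(\<Sum>t<T. a t * (- ?c)) \<le> (\<Sum>t<T. a t * obj_gap x t)"
    by (intro sum_mono mult_left_mono a_nonneg)
  moreover have "(\<Sum>t<T. a t * (- ?c)) = step_sum T * (- ?c)"
    unfolding step_sum_def by (simp add: sum_distrib_right sum_negf)
  ultimately show ?thesis by (simp add: mult_ac)
qed

lemma scaled_viol_le:
  assumes x: "x \<in> feas_set g" "x \<in> cball 0 R"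
    and R: "R > 0" and T: "T \<ge> 1" and large: "2 / \<eta> \<le> R * sqrt (real T)"
  shows "step_sum T * viol df dg g W R \<eta> T / (2 * \<eta>)
      \<le> R\<^sup>2 + grad_total * (\<Sum>t<T. (a t)\<^sup>2) + 4 * (L * R * step_sum T)"
proof -
  let ?N = "real CARD('n)" and ?S = "step_sum T"
  have "(\<Sum>t<T. a t * dual_gap x t) \<ge> 0"
    by (intro sum_nonneg mult_nonneg_nonneg a_nonneg dual_gap_nonneg x)
  then have "?N * (?S * viol df dg g W R \<eta> T / (2 * \<eta>))
      \<le> ?N * R\<^sup>2 + ?N * (grad_total * (\<Sum>t<T. (a t)\<^sup>2)) + 4 * (?N * L * R * ?S)"
    using viol_absorbed[OF x(2) R T large] sum_sq_grads_le[of T]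
      weighted_obj_gap_lower_bound[OF x(2), of T]
    by linarith
  also have "\<dots> = ?N * (R\<^sup>2 + grad_total * (\<Sum>t<T. (a t)\<^sup>2) + 4 * (L * R * ?S))"
    by (simp add: algebra_simps)
  finally show ?thesis by (rule mult_left_le_imp_le) simp
qed

lemma viol_le_eta:
  assumes x: "x \<in> feas_set g" "x \<in> cball 0 R"
  shows "eventually (\<lambda>T. viol df dg g W R \<eta> T \<le> (8 * L * R + 1) * \<eta>) sequentially"
proof (cases "R = 0")
  case True
  then show ?thesis using viol_zero_radius[OF True x] eta_pos by simp
next
  case False
  then have R: "R > 0" using R_nonneg by simp
  have "eventually (\<lambda>T. 2 / \<eta> \<le> R * sqrt (real T)) sequentially"
    by (rule eventually_le_mult_sqrt[OF R])
  moreover have "eventually (\<lambda>T. (R\<^sup>2 + grad_total * R\<^sup>2) + (grad_total * R\<^sup>2) * ln (real T)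
      \<le> (R / 2) * sqrt (real T)) sequentially"
    by (rule eventually_affine_ln_le_sqrt) (use R in simp)
  moreover have "eventually (\<lambda>T::nat. T \<ge> 1) sequentially" by (rule eventually_ge_at_top)
  ultimately show ?thesis
  proof eventually_elim
    case (elim T)
    let ?P = "viol df dg g W R \<eta> T" and ?S = "step_sum T"
    have "R\<^sup>2 + grad_total * (\<Sum>t<T. (a t)\<^sup>2) \<le> R\<^sup>2 + grad_total * (R\<^sup>2 * (1 + ln (real T)))"
      using sum_sq_stepsize_le[OF elim(3)] grad_total_nonneg by (simp add: mult_left_mono)
    also have "\<dots> \<le> ?S / 2"
      using elim(2) step_sum_ge[of T] by (simp add: algebra_simps)
    finally have "?S * ?P / (2 * \<eta>) \<le> ?S / 2 + 4 * (L * R * ?S)"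
      using scaled_viol_le[OF x R elim(3) elim(1)] by linarith
    moreover have "?S * (?P / \<eta>) = 2 * (?S * ?P / (2 * \<eta>))" by simp
    ultimately have "?S * (?P / \<eta>) \<le> ?S * (8 * L * R + 1)" by (simp add: algebra_simps)
    then have "?P / \<eta> \<le> 8 * L * R + 1"
      using step_sum_pos[OF R elim(3)] by (rule mult_left_le_imp_le)
    then show ?case using eta_pos by (simp add: divide_le_eq mult.commute)
  qed
qed

end

section \<open>The strictly feasible case\<close>

context problem
begin

lemma f_convex_comb_le:
  assumes x: "x \<in> cball 0 R" and y: "y \<in> cball 0 R" and u: "0 \<le> u" "u \<le> 1"
  shows "f i ((1 - u) *\<^sub>R x + u *\<^sub>R y) \<le> (1 - u) * f i x + u * f i y"
proof -
  define z where "z = (1 - u) *\<^sub>R x + u *\<^sub>R y"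
  have z: "z \<in> cball 0 R"
    unfolding z_def using convex_cball[of "0::real^'d" R] x y u by (simp add: convex_def)
  have "(1 - u) * (f i z + df i z \<bullet> (x - z)) \<le> (1 - u) * f i x"
    using df_subgrad[OF z x] u by (simp add: mult_left_mono)
  moreover have "u * (f i z + df i z \<bullet> (y - z)) \<le> u * f i y"
    using df_subgrad[OF z y] u by (simp add: mult_left_mono)
  moreover have "(1 - u) *\<^sub>R (x - z) + u *\<^sub>R (y - z) = 0"
    unfolding z_def by (simp add: algebra_simps)
  then have "(1 - u) * (df i z \<bullet> (x - z)) + u * (df i z \<bullet> (y - z)) = 0"
    by (metis inner_add_right inner_scaleR_right inner_zero_right)
  ultimately show ?thesis unfolding z_def[symmetric] by (simp add: algebra_simps)
qed

definition cons_const :: real where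
  "cons_const = L * real CARD('n) * (4 * real period / contraction + 1)"

lemma cons_const_nonneg: "cons_const \<ge> 0"
  unfolding cons_const_def using L_nonneg contraction_pos by simp

definition slack :: "real^'d \<Rightarrow> real" where
  "slack x = Min (range (\<lambda>k. - g k x))"

lemma slack_le: "slack x \<le> - g k x"
  unfolding slack_def by (rule Min_le) auto

lemma slack_pos:
  assumes "\<And>k. g k x < 0"
  shows "slack x > 0"
proof -
  have "slack x \<in> range (\<lambda>k. - g k x)" unfolding slack_def by (rule Min_in) auto
  then show ?thesis using assms by auto
qed

text \<open>A short step from a strictly feasible point towards any point of the ball stays feasible.\<close>

lemma strictly_feasible_min_on_ball:
  assumes xs: "xs \<in> feas_set g" "xs \<in> cball 0 R"
    and opt: "\<forall>x\<in>feas_set g. avg_obj f xs \<le> avg_obj f x"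
    and strict: "\<And>k. g k xs < 0"
    and y: "y \<in> cball 0 R"
  shows "(\<Sum>i\<in>UNIV. f i xs) \<le> (\<Sum>i\<in>UNIV. f i y)"
proof -
  let ?\<delta> = "slack xs"
  have LR: "L * R \<ge> 0" using L_nonneg R_nonneg by simp
  define u where "u = ?\<delta> / (2 * L * R + ?\<delta>)"
  have u: "u > 0" "u \<le> 1" unfolding u_def using slack_pos[OF strict] LR by auto
  define z where "z = (1 - u) *\<^sub>R xs + u *\<^sub>R y"
  have z: "z \<in> cball 0 R"
    unfolding z_def using convex_cball[of "0::real^'d" R] xs(2) y u by (simp add: convex_def)
  have "xs - z = u *\<^sub>R (xs - y)" unfolding z_def by (simp add: algebra_simps)
  then have "norm (xs - z) = u * norm (y - xs)" using u by (simp add: norm_minus_commute)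
  also have "\<dots> \<le> u * (2 * R)"
    using norm_diff_le_diameter[OF y xs(2)] u by (simp add: mult_left_mono)
  finally have "L * norm (xs - z) \<le> L * (u * (2 * R))" using L_nonneg by (rule mult_left_mono)
  also have "\<dots> = ?\<delta> * (2 * L * R) / (2 * L * R + ?\<delta>)" unfolding u_def by simp
  also have "\<dots> \<le> ?\<delta>"
    using slack_pos[OF strict] LR by (simp add: divide_le_eq)
  finally have "g k z \<le> 0" for k
    using g_ge_lipschitz[OF z xs(2), of k] slack_le[of xs k] by linarith
  then have "avg_obj f xs \<le> avg_obj f z" using opt unfolding feas_set_def by blast
  then have "(\<Sum>i\<in>UNIV. f i xs) \<le> (\<Sum>i\<in>UNIV. f i z)"
    unfolding avg_obj_def by (simp add: divide_le_cancel)
  also have "\<dots> \<le> (\<Sum>i\<in>UNIV. (1 - u) * f i xs + u * f i y)"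
    unfolding z_def using f_convex_comb_le[OF xs(2) y] u by (intro sum_mono) auto
  also have "\<dots> = (1 - u) * (\<Sum>i\<in>UNIV. f i xs) + u * (\<Sum>i\<in>UNIV. f i y)"
    by (simp add: sum.distrib sum_distrib_left)
  finally show ?thesis using u by (simp add: algebra_simps)
qed

end

context run
begin

definition grad_x_total :: "nat \<Rightarrow> real" where
  "grad_x_total t = (\<Sum>j\<in>UNIV. norm (grad_x t j))"

definition mix_error :: "nat \<Rightarrow> 'n \<Rightarrow> real^'d" where
  "mix_error t = (\<lambda>i. X (Suc t) i - mat_apply W (X t) i)"

lemma X_Suc_eq_mix: "X (Suc t) = (\<lambda>i. mat_apply W (X t) i + mix_error t i)"
  unfolding mix_error_def by simp

lemma grad_x_total_nonneg: "grad_x_total t \<ge> 0"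
  unfolding grad_x_total_def by (simp add: sum_nonneg)

lemma mat_apply_W_X_in_ball: "mat_apply W (X t) i \<in> cball 0 R"
proof -
  have "norm (mat_apply W (X t) i) \<le> (\<Sum>j\<in>UNIV. W i j * R)"
    unfolding mat_apply_def
    by (rule order_trans[OF norm_sum], rule sum_mono)
      (use X_in_ball W_nonneg in \<open>auto intro: mult_left_mono\<close>)
  also have "\<dots> = R" by (simp add: sum_distrib_right[symmetric] W_rows)
  finally show ?thesis by simp
qed

lemma norm_mix_error_le: "norm (mix_error t i) \<le> a t * grad_x_total t"
proof -
  have "norm (mix_error t i)
      \<le> norm ((\<Sum>j\<in>UNIV. W i j *\<^sub>R (X t j - a t *\<^sub>R grad_x t j)) - mat_apply W (X t) i)"
    unfolding mix_error_def X_Suc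
    by (rule norm_closest_point_minus_le[OF convex_cball closed_cball mat_apply_W_X_in_ball])
  also have "\<dots> = norm (\<Sum>j\<in>UNIV. (W i j * a t) *\<^sub>R grad_x t j)"
    unfolding mat_apply_def by (simp add: scaleR_diff_right sum_subtractf norm_minus_commute)
  also have "\<dots> \<le> (\<Sum>j\<in>UNIV. W i j * a t * norm (grad_x t j))"
    by (rule order_trans[OF norm_sum]) (simp add: W_nonneg a_nonneg)
  also have "\<dots> \<le> (\<Sum>j\<in>UNIV. a t * norm (grad_x t j))"
  proof (rule sum_mono)
    fix j
    show "W i j * a t * norm (grad_x t j) \<le> a t * norm (grad_x t j)"
      using mult_right_mono[OF W_le_1[of i j], of "a t * norm (grad_x t j)"] a_nonneg[of t]
      by (simp add: mult.assoc)
  qed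
  also have "\<dots> = a t * grad_x_total t" unfolding grad_x_total_def by (simp add: sum_distrib_left)
  finally show ?thesis .
qed

lemma weighted_spread_X_le:
  "(\<Sum>t<T. a t * spread (X t)) \<le> (real period / contraction) * (2 * (\<Sum>t<T. (a t)\<^sup>2 * grad_x_total t))"
proof -
  have "(\<Sum>t<T. a t * spread (X t)) \<le> (real period / contraction) * (\<Sum>t<T. a t * (2 * (a t * grad_x_total t)))"
  proof (rule weighted_spread_sum_le[of X mix_error, OF X_Suc_eq_mix])
    show "spread (mix_error t) \<le> 2 * (a t * grad_x_total t)" for t
      by (rule spread_le_of_norm_le) (rule norm_mix_error_le)
    show "0 \<le> 2 * (a t * grad_x_total t)" for t using a_nonneg grad_x_total_nonneg by simp
  qed (simp_all add: X_0 spread_const a_nonneg a_antimono)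
  also have "(\<Sum>t<T. a t * (2 * (a t * grad_x_total t))) = 2 * (\<Sum>t<T. (a t)\<^sup>2 * grad_x_total t)"
    by (simp add: sum_distrib_left power2_eq_square mult_ac)
  finally show ?thesis .
qed

lemma mean_X_in_ball: "(1 / real CARD('n)) *\<^sub>R (\<Sum>l\<in>UNIV. X t l) \<in> cball 0 R"
proof -
  have "norm (\<Sum>l\<in>UNIV. X t l) \<le> (\<Sum>l\<in>(UNIV::'n set). R)"
    by (rule order_trans[OF norm_sum], rule sum_mono) (use X_in_ball in auto)
  then show ?thesis by (simp add: divide_le_eq mult.commute)
qed

lemma midpoint_near_mean:
  "norm ((1/2) *\<^sub>R (X t i + X (Suc t) i) - (1 / real CARD('n)) *\<^sub>R (\<Sum>l\<in>UNIV. X t l))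
    \<le> spread (X t) + a t * grad_x_total t / 2"
proof -
  let ?xbar = "(1 / real CARD('n)) *\<^sub>R (\<Sum>l\<in>UNIV. X t l)"
  have "(1/2) *\<^sub>R (X t i + X (Suc t) i) - ?xbar
      = ((1/2) *\<^sub>R (X t i + mat_apply W (X t) i) - ?xbar) + (1/2) *\<^sub>R mix_error t i"
    unfolding mix_error_def by (simp add: algebra_simps)
  then have "norm ((1/2) *\<^sub>R (X t i + X (Suc t) i) - ?xbar)
      \<le> norm ((1/2) *\<^sub>R (X t i + mat_apply W (X t) i) - ?xbar) + norm ((1/2) *\<^sub>R mix_error t i)"
    by (metis norm_triangle_ineq)
  also have "\<dots> \<le> spread (X t) + a t * grad_x_total t / 2"
    using norm_midpoint_minus_mean_le[of "X t" i] norm_mix_error_le[of t i] by simp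
  finally show ?thesis .
qed

text \<open>By convexity two consecutive iterates lie above twice the value at their midpoint, which is
  close to the network mean, and the mean cannot beat the optimum.\<close>

lemma obj_gap_pair_ge:
  assumes xs: "xs \<in> feas_set g" "xs \<in> cball 0 R"
    and opt: "\<forall>x\<in>feas_set g. avg_obj f xs \<le> avg_obj f x"
    and strict: "\<And>k. g k xs < 0"
  shows "obj_gap xs t + obj_gap xs (Suc t)
      \<ge> - (2 * L * real CARD('n) * spread (X t)) - L * real CARD('n) * (a t * grad_x_total t)"
proof -
  let ?N = "real CARD('n)"
  define xbar where "xbar = (1 / ?N) *\<^sub>R (\<Sum>l\<in>UNIV. X t l)"
  define z where "z i = (1/2) *\<^sub>R (X t i + X (Suc t) i)" for i
  have xbar: "xbar \<in> cball 0 R" unfolding xbar_def by (rule mean_X_in_ball)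
  have z: "z i \<in> cball 0 R" for i
    using f_convex_comb_le X_in_ball convex_cball[of "0::real^'d" R]
    unfolding z_def convex_def by (simp add: scaleR_add_right)
  have "2 * f i (z i) \<le> f i (X t i) + f i (X (Suc t) i)" for i
    using f_convex_comb_le[OF X_in_ball X_in_ball, of "1/2" i t i "Suc t" i]
    unfolding z_def by (simp add: scaleR_add_right)
  moreover have "f i xbar - L * (spread (X t) + a t * grad_x_total t / 2) \<le> f i (z i)" for i
    using f_ge_lipschitz[OF xbar z, of i i] mult_left_mono[OF midpoint_near_mean L_nonneg, of t i]
    unfolding z_def xbar_def by linarith
  ultimately have "(\<Sum>i\<in>UNIV. 2 * f i xbar - 2 * (L * (spread (X t) + a t * grad_x_total t / 2)))
      \<le> (\<Sum>i\<in>UNIV. f i (X t i) + f i (X (Suc t) i))"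
    by (intro sum_mono) (smt (verit))
  then have "2 * (\<Sum>i\<in>UNIV. f i xbar) - ?N * (2 * (L * (spread (X t) + a t * grad_x_total t / 2)))
       \<le> (\<Sum>i\<in>UNIV. f i (X t i)) + (\<Sum>i\<in>UNIV. f i (X (Suc t) i))"
    by (simp add: sum_subtractf sum.distrib sum_distrib_left)
  moreover have "(\<Sum>i\<in>UNIV. f i xs) \<le> (\<Sum>i\<in>UNIV. f i xbar)"
    by (rule strictly_feasible_min_on_ball[OF xs opt strict xbar])
  ultimately show ?thesis
    unfolding obj_gap_def by (simp add: sum_subtractf algebra_simps)
qed

lemma weighted_obj_gap_ge_strict_opt:
  assumes xs: "xs \<in> feas_set g" "xs \<in> cball 0 R"
    and opt: "\<forall>x\<in>feas_set g. avg_obj f xs \<le> avg_obj f x"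
    and strict: "\<And>k. g k xs < 0"
  shows "2 * (\<Sum>t<Suc T. a t * obj_gap xs t)
      \<ge> - (4 * real CARD('n) * L * R\<^sup>2) - cons_const * (\<Sum>t<Suc T. (a t)\<^sup>2 * grad_x_total t)"
proof -
  let ?N = "real CARD('n)" and ?E = "\<Sum>t<T. (a t)\<^sup>2 * grad_x_total t"
  have boundary: "a 0 * obj_gap xs 0 + a T * obj_gap xs T + (\<Sum>t<T. (a (Suc t) - a t) * obj_gap xs (Suc t))
      \<ge> - (4 * ?N * L * R\<^sup>2)"
    using boundary_terms_ge[where F="obj_gap xs" and a=a and T=T,
        OF abs_obj_gap_le[OF xs(2)] a_nonneg a_antimono]
    by (simp add: stepsize_def power2_eq_square mult_ac)
  have "(\<Sum>t<T. a t * (obj_gap xs t + obj_gap xs (Suc t)))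
      \<ge> (\<Sum>t<T. a t * (- (2 * L * ?N * spread (X t)) - L * ?N * (a t * grad_x_total t)))"
    by (intro sum_mono mult_left_mono obj_gap_pair_ge[OF xs opt strict] a_nonneg)
  also have "(\<Sum>t<T. a t * (- (2 * L * ?N * spread (X t)) - L * ?N * (a t * grad_x_total t)))
      = - (2 * L * ?N) * (\<Sum>t<T. a t * spread (X t)) - L * ?N * ?E"
    by (simp add: sum_subtractf sum_distrib_left sum_negf power2_eq_square algebra_simps)
  also have "\<dots> \<ge> - (2 * L * ?N) * ((real period / contraction) * (2 * ?E)) - L * ?N * ?E"
    using mult_left_mono[OF weighted_spread_X_le[of T], of "2 * L * ?N"] L_nonneg by simp
  finally have pairs: "(\<Sum>t<T. a t * (obj_gap xs t + obj_gap xs (Suc t))) \<ge> - cons_const * ?E"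
    unfolding cons_const_def by (simp add: algebra_simps)
  have "cons_const * ?E \<le> cons_const * (\<Sum>t<Suc T. (a t)\<^sup>2 * grad_x_total t)"
    using grad_x_total_nonneg[of T] cons_const_nonneg by (simp add: mult_left_mono)
  then show ?thesis
    using sum_weighted_pairs[of a "obj_gap xs" T] boundary pairs by linarith
qed

definition lam_total :: "nat \<Rightarrow> real" where
  "lam_total t = (\<Sum>i\<in>UNIV. lam_sum t i)"

lemma lam_total_nonneg: "lam_total t \<ge> 0"
  unfolding lam_total_def by (simp add: sum_nonneg lam_sum_nonneg)

lemma lam_total_le: "lam_total t \<le> real CARD('n) * (real CARD('m) * lam_max)"
  using sum_mono[of UNIV "lam_sum t" "\<lambda>i. real CARD('m) * lam_max"] lam_sum_le
  unfolding lam_total_def by simp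

lemma grad_x_total_le: "grad_x_total t \<le> L * real CARD('n) + L * lam_total t"
proof -
  have "grad_x_total t \<le> (\<Sum>j\<in>UNIV. L * (1 + lam_sum t j))"
    unfolding grad_x_total_def by (rule sum_mono) (rule norm_grad_x_le)
  also have "\<dots> = L * real CARD('n) + L * lam_total t"
    unfolding lam_total_def by (simp add: sum.distrib sum_distrib_left distrib_left)
  finally show ?thesis .
qed

lemma dual_gap_ge_slack: "dual_gap xs t \<ge> slack xs * lam_total t"
proof -
  have "slack xs * lam_sum t i \<le> - (Lam t i \<bullet> gvec g xs)" for i
  proof -
    have "slack xs * lam_sum t i = (\<Sum>k\<in>UNIV. Lam t i $ k * slack xs)"
      unfolding lam_sum_def by (simp add: sum_distrib_left mult.commute)
    also have "\<dots> \<le> (\<Sum>k\<in>UNIV. Lam t i $ k * (- g k xs))"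
      by (intro sum_mono mult_left_mono slack_le Lam_nonneg)
    also have "\<dots> = - (Lam t i \<bullet> gvec g xs)" unfolding inner_gvec by (simp add: sum_negf)
    finally show ?thesis .
  qed
  then show ?thesis unfolding dual_gap_def lam_total_def sum_distrib_left by (rule sum_mono)
qed

text \<open>Under strict feasibility the dual gap grows like the slack times the duals, while the
  dual-dependent gradient terms carry an extra stepsize factor, so their excess is bounded.\<close>

lemma dual_excess_bounded:
  assumes strict: "\<And>k. g k xs < 0"
  obtains K where
    "\<And>T. grad_lam_coeff * (\<Sum>t<T. (a t)\<^sup>2 * lam_total t) + cons_const * L * (\<Sum>t<T. (a t)\<^sup>2 * lam_total t)
      - 2 * (slack xs * (\<Sum>t<T. a t * lam_total t)) \<le> K"
proof -
  let ?\<delta> = "slack xs" and ?c = "grad_lam_coeff + cons_const * L"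
  have \<delta>: "?\<delta> > 0" by (rule slack_pos[OF strict])
  have c: "?c \<ge> 0" using grad_lam_coeff_nonneg cons_const_nonneg L_nonneg by simp
  obtain t0 where t0: "\<And>t. t \<ge> t0 \<Longrightarrow> R * ?c \<le> (2 * ?\<delta>) * sqrt (real t)"
    using eventually_le_mult_sqrt[of "2 * ?\<delta>" "R * ?c"] \<delta> unfolding eventually_sequentially by auto
  define K where "K = real CARD('n) * (real CARD('m) * lam_max) * R\<^sup>2 * ?c"
  have K: "K \<ge> 0" unfolding K_def using lam_max_nonneg c by simp
  have term_le: "lam_total t * ((a t)\<^sup>2 * ?c - 2 * ?\<delta> * a t) \<le> (if t < t0 then K else 0)" for t
  proof (cases "t < t0")
    case True
    have "lam_total t * ((a t)\<^sup>2 * ?c - 2 * ?\<delta> * a t) \<le> lam_total t * ((a t)\<^sup>2 * ?c)"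
      using lam_total_nonneg \<delta> a_nonneg by (intro mult_left_mono) auto
    also have "\<dots> \<le> (real CARD('n) * (real CARD('m) * lam_max)) * (R\<^sup>2 * ?c)"
      using lam_total_le lam_total_nonneg a_le_R a_nonneg c lam_max_nonneg
      by (intro mult_mono mult_right_mono power_mono) auto
    finally show ?thesis using True unfolding K_def by (simp add: mult.assoc)
  next
    case False
    have "(2 * ?\<delta>) * sqrt (real t) \<le> (2 * ?\<delta>) * sqrt (real t + 1)"
      using \<delta> by (intro mult_left_mono) auto
    then have "R * ?c \<le> (2 * ?\<delta>) * sqrt (real t + 1)"
      using t0[of t] False by linarith
    then have "a t * ?c \<le> 2 * ?\<delta>" unfolding stepsize_def by (simp add: divide_le_eq mult.commute)
    then have "(a t)\<^sup>2 * ?c - 2 * ?\<delta> * a t \<le> 0"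
      using a_nonneg[of t] mult_left_mono[of "a t * ?c" "2 * ?\<delta>" "a t"]
      by (simp add: power2_eq_square algebra_simps)
    then show ?thesis using False lam_total_nonneg by (simp add: mult_nonneg_nonpos)
  qed
  have "?c * (\<Sum>t<T. (a t)\<^sup>2 * lam_total t) - 2 * ?\<delta> * (\<Sum>t<T. a t * lam_total t) \<le> real t0 * K"
    for T
  proof -
    have "?c * (\<Sum>t<T. (a t)\<^sup>2 * lam_total t) - 2 * ?\<delta> * (\<Sum>t<T. a t * lam_total t)
        = (\<Sum>t<T. lam_total t * ((a t)\<^sup>2 * ?c - 2 * ?\<delta> * a t))"
      by (simp add: sum_subtractf sum_distrib_left algebra_simps)
    also have "\<dots> \<le> (\<Sum>t<T. if t < t0 then K else 0)" by (intro sum_mono term_le)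
    also have "\<dots> \<le> real t0 * K" by (rule sum_indicator_prefix_le[OF K])
    finally show ?thesis .
  qed
  then have "grad_lam_coeff * (\<Sum>t<T. (a t)\<^sup>2 * lam_total t) + cons_const * L * (\<Sum>t<T. (a t)\<^sup>2 * lam_total t)
      - 2 * (slack xs * (\<Sum>t<T. a t * lam_total t)) \<le> real t0 * K" for T
    by (simp add: algebra_simps)
  then show ?thesis by (rule that)
qed

lemma scaled_viol_le_strict:
  assumes xs: "xs \<in> feas_set g" "xs \<in> cball 0 R"
    and opt: "\<forall>x\<in>feas_set g. avg_obj f xs \<le> avg_obj f x"
    and strict: "\<And>k. g k xs < 0"
    and Kx: "\<And>T. grad_lam_coeff * (\<Sum>t<T. (a t)\<^sup>2 * lam_total t)
      + cons_const * L * (\<Sum>t<T. (a t)\<^sup>2 * lam_total t)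
      - 2 * (slack xs * (\<Sum>t<T. a t * lam_total t)) \<le> Kx"
    and R: "R > 0" and T: "T \<ge> 1" and large: "2 / \<eta> \<le> R * sqrt (real T)"
  shows "step_sum T * viol df dg g W R \<eta> T / (2 * \<eta>)
      \<le> Kx / real CARD('n) + R\<^sup>2 + 4 * L * R\<^sup>2 + (grad_const + cons_const * L) * (\<Sum>t<T. (a t)\<^sup>2)"
proof -
  let ?N = "real CARD('n)"
  define Q where "Q = (\<Sum>t<T. (a t)\<^sup>2)"
  define U where "U = (\<Sum>t<T. (a t)\<^sup>2 * lam_total t)"
  define V where "V = (\<Sum>t<T. a t * lam_total t)"
  define E where "E = (\<Sum>t<T. (a t)\<^sup>2 * grad_x_total t)"
  obtain T' where T': "T = Suc T'" using T by (cases T) auto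
  have grads: "(\<Sum>t<T. (a t)\<^sup>2 * (\<Sum>i\<in>UNIV. grad_const + grad_lam_coeff * lam_sum t i))
      = ?N * grad_const * Q + grad_lam_coeff * U"
    unfolding Q_def U_def lam_total_def
    by (simp add: sum.distrib sum_distrib_left sum_distrib_right algebra_simps)
  have obj: "2 * (\<Sum>t<T. a t * obj_gap xs t) \<ge> - (4 * ?N * L * R\<^sup>2) - cons_const * E"
    using weighted_obj_gap_ge_strict_opt[OF xs opt strict, of T'] unfolding E_def T' .
  have "E \<le> (\<Sum>t<T. (a t)\<^sup>2 * (L * ?N + L * lam_total t))"
    unfolding E_def by (intro sum_mono mult_left_mono grad_x_total_le) simp
  also have "\<dots> = L * ?N * Q + L * U"
    unfolding Q_def U_def by (simp add: sum.distrib sum_distrib_left sum_distrib_right algebra_simps)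
  finally have "cons_const * E \<le> cons_const * (L * ?N * Q + L * U)"
    by (rule mult_left_mono[OF _ cons_const_nonneg])
  then have "cons_const * E \<le> cons_const * L * ?N * Q + cons_const * L * U"
    by (simp add: algebra_simps)
  moreover have "(\<Sum>t<T. a t * dual_gap xs t) \<ge> slack xs * V"
  proof -
    have "(\<Sum>t<T. a t * (slack xs * lam_total t)) \<le> (\<Sum>t<T. a t * dual_gap xs t)"
      by (intro sum_mono mult_left_mono dual_gap_ge_slack a_nonneg)
    then show ?thesis unfolding V_def by (simp add: sum_distrib_left mult_ac)
  qed
  ultimately have "?N * (step_sum T * viol df dg g W R \<eta> T / (2 * \<eta>))
      \<le> ?N * R\<^sup>2 + 4 * ?N * L * R\<^sup>2 + ?N * grad_const * Q + cons_const * L * ?N * Q + Kx"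
    using viol_absorbed[OF xs(2) R T large] grads obj Kx[of T]
    unfolding U_def[symmetric] V_def[symmetric] by linarith
  also have "\<dots> = ?N * (Kx / ?N + R\<^sup>2 + 4 * L * R\<^sup>2 + (grad_const + cons_const * L) * Q)"
    by (simp add: algebra_simps)
  finally show ?thesis unfolding Q_def by (rule mult_left_le_imp_le) simp
qed

lemma viol_le_eta_ln_sqrt:
  assumes xs: "xs \<in> feas_set g" "xs \<in> cball 0 R"
    and opt: "\<forall>x\<in>feas_set g. avg_obj f xs \<le> avg_obj f x"
    and strict: "\<And>k. g k xs < 0"
  shows "eventually (\<lambda>T. viol df dg g W R \<eta> T
      \<le> (2 * (grad_const + cons_const * L) * R + 1) * (\<eta> * ln (real T) / sqrt (real T))) sequentially"
proof (cases "R = 0")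
  case True
  show ?thesis
    using eventually_ge_at_top[of 1]
    by eventually_elim (use viol_zero_radius[OF True xs] eta_pos True in simp)
next
  case False
  then have R: "R > 0" using R_nonneg by simp
  let ?K = "grad_const + cons_const * L"
  obtain Kx where Kx: "\<And>T. grad_lam_coeff * (\<Sum>t<T. (a t)\<^sup>2 * lam_total t)
      + cons_const * L * (\<Sum>t<T. (a t)\<^sup>2 * lam_total t)
      - 2 * (slack xs * (\<Sum>t<T. a t * lam_total t)) \<le> Kx"
    using dual_excess_bounded[OF strict] by blast
  define C0 where "C0 = Kx / real CARD('n) + R\<^sup>2 + 4 * L * R\<^sup>2 + ?K * R\<^sup>2"
  have K: "?K \<ge> 0" using grad_const_nonneg cons_const_nonneg L_nonneg by simp
  have "eventually (\<lambda>T. 2 / \<eta> \<le> R * sqrt (real T)) sequentially"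
    by (rule eventually_le_mult_sqrt[OF R])
  moreover have "eventually (\<lambda>T. C0 \<le> ln (real T) * (R / 2)) sequentially"
    using eventually_le_ln[of "C0 / (R / 2)"] by eventually_elim (use R in \<open>simp add: divide_le_eq\<close>)
  moreover have "eventually (\<lambda>T::nat. T \<ge> 1) sequentially" by (rule eventually_ge_at_top)
  ultimately show ?thesis
  proof eventually_elim
    case (elim T)
    let ?P = "viol df dg g W R \<eta> T" and ?c = "R * sqrt (real T) / (2 * \<eta>)"
    have "?K * (\<Sum>t<T. (a t)\<^sup>2) \<le> ?K * R\<^sup>2 + ?K * R\<^sup>2 * ln (real T)"
      using mult_left_mono[OF sum_sq_stepsize_le[OF elim(3)] K] by (simp add: algebra_simps)
    moreover have "R * sqrt (real T) * ?P / (2 * \<eta>) \<le> step_sum T * ?P / (2 * \<eta>)"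
      using step_sum_ge[of T] viol_nonneg eta_pos by (intro divide_right_mono mult_right_mono) auto
    then have "?c * ?P \<le> step_sum T * ?P / (2 * \<eta>)" by simp
    ultimately have "?c * ?P \<le> ln (real T) * (R / 2) + ?K * R\<^sup>2 * ln (real T)"
      using scaled_viol_le_strict[OF xs opt strict Kx R elim(3) elim(1)] elim(2)
      unfolding C0_def by linarith
    also have "\<dots> = ?c * ((2 * ?K * R + 1) * (\<eta> * ln (real T) / sqrt (real T)))"
      using R eta_pos elim(3) by (simp add: field_simps power2_eq_square)
    finally have "?c * ?P \<le> ?c * ((2 * ?K * R + 1) * (\<eta> * ln (real T) / sqrt (real T)))" .
    moreover have "?c > 0" using R eta_pos elim(3) by simp
    ultimately show ?case by (rule mult_left_le_imp_le)
  qed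
qed

end

theorem theorem3:
  fixes f :: "'n::finite \<Rightarrow> real^'d::finite \<Rightarrow> real"
    and df :: "'n \<Rightarrow> real^'d \<Rightarrow> real^'d"
    and g :: "'m::finite \<Rightarrow> real^'d \<Rightarrow> real"
    and dg :: "'m \<Rightarrow> real^'d \<Rightarrow> real^'d"
    and W :: "'n \<Rightarrow> 'n \<Rightarrow> real"
    and E :: "('n \<times> 'n) set"
    and R L :: real
  assumes X_nonempty: "feas_set g \<noteq> {}"
    and X_convex: "convex (feas_set g)"
    and X_compact: "compact (feas_set g)"
    and R_ball: "feas_set g \<subseteq> cball 0 R"
    and R_smallest: "\<And>r. feas_set g \<subseteq> cball 0 r \<Longrightarrow> R \<le> r"
    and slater: "\<exists>xt. \<forall>k. g k xt < 0"
    and f_convex: "\<And>i. convex_on (cball 0 R) (f i)"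
    and g_convex: "\<And>k. convex_on (cball 0 R) (g k)"
    and df_subgrad: "\<And>i x y. x \<in> cball 0 R \<Longrightarrow> y \<in> cball 0 R \<Longrightarrow> f i y \<ge> f i x + df i x \<bullet> (y - x)"
    and dg_subgrad: "\<And>k x y. x \<in> cball 0 R \<Longrightarrow> y \<in> cball 0 R \<Longrightarrow> g k y \<ge> g k x + dg k x \<bullet> (y - x)"
    and df_bound: "\<And>i x. x \<in> cball 0 R \<Longrightarrow> norm (df i x) \<le> L"
    and dg_bound: "\<And>k x. x \<in> cball 0 R \<Longrightarrow> norm (dg k x) \<le> L"
    and E_sym: "sym E"
    and E_connected: "\<And>i j. (i, j) \<in> E\<^sup>*"
    and W_nonneg: "\<And>i j. W i j \<ge> 0"
    and W_rows: "\<And>i. (\<Sum>j\<in>UNIV. W i j) = 1"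
    and W_cols: "\<And>j. (\<Sum>i\<in>UNIV. W i j) = 1"
    and W_edge: "\<And>i j. (i, j) \<in> E \<Longrightarrow> W i j > 0"
    and W_nonedge: "\<And>i j. (i, j) \<notin> E \<Longrightarrow> W i j = 0"
  shows "(\<exists>C. \<forall>\<eta>. \<eta> > 0 \<and> (\<forall>t. \<eta> * stepsize R t \<le> 1 / 2) \<longrightarrow>
            eventually (\<lambda>T. viol df dg g W R \<eta> T \<le> C * \<eta>) sequentially)
       \<and> ((\<exists>xs. xs \<in> feas_set g \<and> (\<forall>x\<in>feas_set g. avg_obj f xs \<le> avg_obj f x)
               \<and> (\<forall>k. g k xs < 0)) \<longrightarrow>
          (\<exists>C. \<forall>\<eta>. \<eta> > 0 \<and> (\<forall>t. \<eta> * stepsize R t \<le> 1 / 2) \<longrightarrow>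
            eventually (\<lambda>T. viol df dg g W R \<eta> T \<le> C * (\<eta> * ln (real T) / sqrt (real T))) sequentially))"
proof -
  obtain x0 where x0: "x0 \<in> feas_set g" "x0 \<in> cball 0 R" using X_nonempty R_ball by blast
  then interpret problem W E df f g dg R L
    by unfold_locales (use E_sym E_connected W_nonneg W_rows W_cols W_edge W_nonedge
        df_subgrad dg_subgrad df_bound dg_bound in \<open>auto intro: order_trans[OF norm_ge_zero]\<close>)
  have run: "run W E df f g dg R L \<eta>" if "\<eta> > 0 \<and> (\<forall>t. \<eta> * stepsize R t \<le> 1 / 2)" for \<eta>
    using that by (intro run.intro run_axioms.intro problem_axioms) auto
  show ?thesis
  proof (intro conjI impI)
    show "\<exists>C. \<forall>\<eta>. \<eta> > 0 \<and> (\<forall>t. \<eta> * stepsize R t \<le> 1 / 2) \<longrightarrow>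
        eventually (\<lambda>T. viol df dg g W R \<eta> T \<le> C * \<eta>) sequentially"
      using run.viol_le_eta[OF run x0] by blast
    assume "\<exists>xs. xs \<in> feas_set g \<and> (\<forall>x\<in>feas_set g. avg_obj f xs \<le> avg_obj f x) \<and> (\<forall>k. g k xs < 0)"
    then obtain xs where xs: "xs \<in> feas_set g" "\<forall>x\<in>feas_set g. avg_obj f xs \<le> avg_obj f x"
      "\<And>k. g k xs < 0" by blast
    then show "\<exists>C. \<forall>\<eta>. \<eta> > 0 \<and> (\<forall>t. \<eta> * stepsize R t \<le> 1 / 2) \<longrightarrow>
        eventually (\<lambda>T. viol df dg g W R \<eta> T \<le> C * (\<eta> * ln (real T) / sqrt (real T))) sequentially"
      using run.viol_le_eta_ln_sqrt[OF run xs(1) _ xs(2,3)] R_ball by blast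
  qed
qed

end
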